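(* If $\mathcal{D}$ is a fibrant double category, then the functor $\mathcal{D}_1^{\bullet}\to\mathcal{D}_0$, sending a horizontal endo-1-cell $M\colon A\nrightarrow A$ to $A$ and a morphism of $\mathcal{D}_1^{\bullet}$ to its vertical source (equal to its target), is a bifibration (both a fibration and an opfibration).
   Context: A (pseudo) double category $\mathcal{D}$ has a category $\mathcal{D}_0$ of objects and vertical 1-cells, a category $\mathcal{D}_1$ of horizontal 1-cells $M\colon A\nrightarrow B$ and 2-morphisms (squares with vertical source $f$ and target $g$), source/target functors, units $1_A$, and a horizontal composition $\odot$ associative and unital up to coherent globular isomorphisms. $\mathcal{D}_1^{\bullet}$ is the (non-full) subcategory of $\mathcal{D}_1$ whose objects are horizontal endo-1-cells $M\colon A\nrightarrow A$ and whose morphisms are 2-morphisms with equal vertical source and target $f\colon A\to B$. $\mathcal{D}$ is fibrant if every vertical 1-cell $f\colon A\to B$ has a companion $\hat f\colon A\nrightarrow B$, i.e. 2-morphisms $p_1\colon\hat f\Rightarrow1_B$ (vertical source $f$, target $\mathrm{id}_B$) and $p_2\colon1_A\Rightarrow\hat f$ (source $\mathrm{id}_A$, target $f$) with $p_1p_2=1_f$ and $p_1\odot p_2\cong1_{\hat f}$, and a conjoint $\check f\colon B\nrightarrow A$, i.e. $q_1\colon\check f\Rightarrow1_B$ (source $\mathrm{id}_B$, target $f$) and $q_2\colon1_A\Rightarrow\check f$ (source $f$, target $\mathrm{id}_A$) with $q_1q_2=1_f$ and $q_2\odot q_1\cong1_{\check f}$. *)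

theory Defs
  imports Main
begin

record ('o, 'a) cat_data =
  cOb   :: "'o set"
  cAr   :: "'a set"
  cdom  :: "'a \<Rightarrow> 'o"
  ccod  :: "'a \<Rightarrow> 'o"
  ccomp :: "'a \<Rightarrow> 'a \<Rightarrow> 'a"   (* ccomp C g f = g \<circ> f *)
  cid   :: "'o \<Rightarrow> 'a"

definition category :: "('o, 'a) cat_data \<Rightarrow> bool" where
  "category C \<longleftrightarrow>
     (\<forall>f\<in>cAr C. cdom C f \<in> cOb C \<and> ccod C f \<in> cOb C)
   \<and> (\<forall>a\<in>cOb C. cid C a \<in> cAr C \<and> cdom C (cid C a) = a \<and> ccod C (cid C a) = a)
   \<and> (\<forall>f\<in>cAr C. \<forall>g\<in>cAr C. ccod C f = cdom C g \<longrightarrow>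
        ccomp C g f \<in> cAr C \<and> cdom C (ccomp C g f) = cdom C f \<and> ccod C (ccomp C g f) = ccod C g)
   \<and> (\<forall>f\<in>cAr C. ccomp C f (cid C (cdom C f)) = f \<and> ccomp C (cid C (ccod C f)) f = f)
   \<and> (\<forall>f\<in>cAr C. \<forall>g\<in>cAr C. \<forall>h\<in>cAr C. ccod C f = cdom C g \<and> ccod C g = cdom C h \<longrightarrow>
        ccomp C h (ccomp C g f) = ccomp C (ccomp C h g) f)"

definition iso :: "('o, 'a) cat_data \<Rightarrow> 'a \<Rightarrow> bool" where
  "iso C f \<longleftrightarrow> f \<in> cAr C \<and>
     (\<exists>g\<in>cAr C. cdom C g = ccod C f \<and> ccod C g = cdom C f \<and>
        ccomp C g f = cid C (cdom C f) \<and> ccomp C f g = cid C (ccod C f))"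

definition "functor" :: "('o, 'a) cat_data \<Rightarrow> ('p, 'b) cat_data \<Rightarrow> ('o \<Rightarrow> 'p) \<Rightarrow> ('a \<Rightarrow> 'b) \<Rightarrow> bool" where
  "functor C D Fo Fa \<longleftrightarrow>
     (\<forall>a\<in>cOb C. Fo a \<in> cOb D)
   \<and> (\<forall>f\<in>cAr C. Fa f \<in> cAr D \<and> cdom D (Fa f) = Fo (cdom C f) \<and> ccod D (Fa f) = Fo (ccod C f))
   \<and> (\<forall>a\<in>cOb C. Fa (cid C a) = cid D (Fo a))
   \<and> (\<forall>f\<in>cAr C. \<forall>g\<in>cAr C. ccod C f = cdom C g \<longrightarrow> Fa (ccomp C g f) = ccomp D (Fa g) (Fa f))"

definition cartesian :: "('o, 'a) cat_data \<Rightarrow> ('p, 'b) cat_data \<Rightarrow> ('a \<Rightarrow> 'b) \<Rightarrow> 'a \<Rightarrow> bool" where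
  "cartesian C D Fa \<phi> \<longleftrightarrow> \<phi> \<in> cAr C \<and>
     (\<forall>\<psi>\<in>cAr C. ccod C \<psi> = ccod C \<phi> \<longrightarrow>
       (\<forall>g\<in>cAr D. ccod D g = cdom D (Fa \<phi>) \<and> Fa \<psi> = ccomp D (Fa \<phi>) g \<longrightarrow>
         (\<exists>!\<chi>. \<chi> \<in> cAr C \<and> cdom C \<chi> = cdom C \<psi> \<and> ccod C \<chi> = cdom C \<phi> \<and>
                Fa \<chi> = g \<and> ccomp C \<phi> \<chi> = \<psi>)))"

definition opcartesian :: "('o, 'a) cat_data \<Rightarrow> ('p, 'b) cat_data \<Rightarrow> ('a \<Rightarrow> 'b) \<Rightarrow> 'a \<Rightarrow> bool" where
  "opcartesian C D Fa \<phi> \<longleftrightarrow> \<phi> \<in> cAr C \<and>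
     (\<forall>\<psi>\<in>cAr C. cdom C \<psi> = cdom C \<phi> \<longrightarrow>
       (\<forall>h\<in>cAr D. cdom D h = ccod D (Fa \<phi>) \<and> Fa \<psi> = ccomp D h (Fa \<phi>) \<longrightarrow>
         (\<exists>!\<chi>. \<chi> \<in> cAr C \<and> cdom C \<chi> = ccod C \<phi> \<and> ccod C \<chi> = ccod C \<psi> \<and>
                Fa \<chi> = h \<and> ccomp C \<chi> \<phi> = \<psi>)))"

definition fibration :: "('o, 'a) cat_data \<Rightarrow> ('p, 'b) cat_data \<Rightarrow> ('o \<Rightarrow> 'p) \<Rightarrow> ('a \<Rightarrow> 'b) \<Rightarrow> bool" where
  "fibration C D Fo Fa \<longleftrightarrow> functor C D Fo Fa \<and>
     (\<forall>b\<in>cOb C. \<forall>f\<in>cAr D. ccod D f = Fo b \<longrightarrow>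
        (\<exists>\<phi>. cartesian C D Fa \<phi> \<and> ccod C \<phi> = b \<and> Fa \<phi> = f))"

definition opfibration :: "('o, 'a) cat_data \<Rightarrow> ('p, 'b) cat_data \<Rightarrow> ('o \<Rightarrow> 'p) \<Rightarrow> ('a \<Rightarrow> 'b) \<Rightarrow> bool" where
  "opfibration C D Fo Fa \<longleftrightarrow> functor C D Fo Fa \<and>
     (\<forall>a\<in>cOb C. \<forall>f\<in>cAr D. cdom D f = Fo a \<longrightarrow>
        (\<exists>\<phi>. opcartesian C D Fa \<phi> \<and> cdom C \<phi> = a \<and> Fa \<phi> = f))"

definition bifibration :: "('o, 'a) cat_data \<Rightarrow> ('p, 'b) cat_data \<Rightarrow> ('o \<Rightarrow> 'p) \<Rightarrow> ('a \<Rightarrow> 'b) \<Rightarrow> bool" where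
  "bifibration C D Fo Fa \<longleftrightarrow> fibration C D Fo Fa \<and> opfibration C D Fo Fa"

text \<open>'o objects, 'v vertical 1-cells, 'h horizontal 1-cells, 's 2-morphisms (squares).
  D1 has horizontal 1-cells as objects and squares as morphisms (composed vertically).
  A square \<alpha> : M \<Rightarrow> N has horizontal source M (cdom D1), target N (ccod D1),
  vertical source dc_vsrc \<alpha> (left edge) and vertical target dc_vtgt \<alpha> (right edge).
  Horizontal composition is written in composition order: dc_hcomp N M = N \<odot> M
  for M : A \<nrightarrow> B, N : B \<nrightarrow> C.\<close>

record ('o, 'v, 'h, 's) dbl_data =
  dc_D0      :: "('o, 'v) cat_data"
  dc_D1      :: "('h, 's) cat_data"
  dc_hsrc    :: "'h \<Rightarrow> 'o"
  dc_htgt    :: "'h \<Rightarrow> 'o"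
  dc_vsrc    :: "'s \<Rightarrow> 'v"
  dc_vtgt    :: "'s \<Rightarrow> 'v"
  dc_unit    :: "'o \<Rightarrow> 'h"
  dc_unitsq  :: "'v \<Rightarrow> 's"
  dc_hcomp   :: "'h \<Rightarrow> 'h \<Rightarrow> 'h"
  dc_hcompsq :: "'s \<Rightarrow> 's \<Rightarrow> 's"
  dc_assoc   :: "'h \<Rightarrow> 'h \<Rightarrow> 'h \<Rightarrow> 's"   (* dc_assoc P N M : (P\<odot>N)\<odot>M \<Rightarrow> P\<odot>(N\<odot>M) *)
  dc_lunit   :: "'h \<Rightarrow> 's"                 (* 1_B \<odot> M \<Rightarrow> M *)
  dc_runit   :: "'h \<Rightarrow> 's"                 (* M \<odot> 1_A \<Rightarrow> M *)

definition globular_iso :: "('o, 'v, 'h, 's) dbl_data \<Rightarrow> 's \<Rightarrow> 'h \<Rightarrow> 'h \<Rightarrow> bool" where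
  "globular_iso D \<alpha> M N \<longleftrightarrow>
     iso (dc_D1 D) \<alpha> \<and> cdom (dc_D1 D) \<alpha> = M \<and> ccod (dc_D1 D) \<alpha> = N \<and>
     dc_vsrc D \<alpha> = cid (dc_D0 D) (dc_hsrc D M) \<and> dc_vtgt D \<alpha> = cid (dc_D0 D) (dc_htgt D M)"

definition pseudo_double_category :: "('o, 'v, 'h, 's) dbl_data \<Rightarrow> bool" where
  "pseudo_double_category D \<longleftrightarrow>
   (let D0 = dc_D0 D; D1 = dc_D1 D; S = dc_hsrc D; T = dc_htgt D;
        Sv = dc_vsrc D; Tv = dc_vtgt D; U = dc_unit D; Usq = dc_unitsq D;
        hc = dc_hcomp D; hcs = dc_hcompsq D; a = dc_assoc D; l = dc_lunit D; r = dc_runit D;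
        c1 = ccomp D1; i1 = cid D1 in
     category D0 \<and> category D1
   \<and> functor D1 D0 S Sv \<and> functor D1 D0 T Tv \<and> functor D0 D1 U Usq
   \<and> (\<forall>A\<in>cOb D0. S (U A) = A \<and> T (U A) = A)
   \<and> (\<forall>f\<in>cAr D0. Sv (Usq f) = f \<and> Tv (Usq f) = f)
   \<and> (\<forall>M\<in>cOb D1. \<forall>N\<in>cOb D1. T M = S N \<longrightarrow>
        hc N M \<in> cOb D1 \<and> S (hc N M) = S M \<and> T (hc N M) = T N)
   \<and> (\<forall>\<alpha>\<in>cAr D1. \<forall>\<beta>\<in>cAr D1. Tv \<alpha> = Sv \<beta> \<longrightarrow>
        hcs \<beta> \<alpha> \<in> cAr D1 \<and> cdom D1 (hcs \<beta> \<alpha>) = hc (cdom D1 \<beta>) (cdom D1 \<alpha>)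
        \<and> ccod D1 (hcs \<beta> \<alpha>) = hc (ccod D1 \<beta>) (ccod D1 \<alpha>)
        \<and> Sv (hcs \<beta> \<alpha>) = Sv \<alpha> \<and> Tv (hcs \<beta> \<alpha>) = Tv \<beta>)
   \<and> (\<forall>M\<in>cOb D1. \<forall>N\<in>cOb D1. T M = S N \<longrightarrow> hcs (i1 N) (i1 M) = i1 (hc N M))
   \<and> (\<forall>\<alpha>\<in>cAr D1. \<forall>\<alpha>'\<in>cAr D1. \<forall>\<beta>\<in>cAr D1. \<forall>\<beta>'\<in>cAr D1.
        ccod D1 \<alpha> = cdom D1 \<alpha>' \<and> ccod D1 \<beta> = cdom D1 \<beta>' \<and> Tv \<alpha> = Sv \<beta> \<and> Tv \<alpha>' = Sv \<beta>' \<longrightarrow>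
        hcs (c1 \<beta>' \<beta>) (c1 \<alpha>' \<alpha>) = c1 (hcs \<beta>' \<alpha>') (hcs \<beta> \<alpha>))
   \<comment> \<open>associator: globular, invertible, natural\<close>
   \<and> (\<forall>M\<in>cOb D1. \<forall>N\<in>cOb D1. \<forall>P\<in>cOb D1. T M = S N \<and> T N = S P \<longrightarrow>
        globular_iso D (a P N M) (hc (hc P N) M) (hc P (hc N M)))
   \<and> (\<forall>\<alpha>\<in>cAr D1. \<forall>\<beta>\<in>cAr D1. \<forall>\<gamma>\<in>cAr D1. Tv \<alpha> = Sv \<beta> \<and> Tv \<beta> = Sv \<gamma> \<longrightarrow>
        c1 (a (ccod D1 \<gamma>) (ccod D1 \<beta>) (ccod D1 \<alpha>)) (hcs (hcs \<gamma> \<beta>) \<alpha>)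
        = c1 (hcs \<gamma> (hcs \<beta> \<alpha>)) (a (cdom D1 \<gamma>) (cdom D1 \<beta>) (cdom D1 \<alpha>)))
   \<comment> \<open>unitors: globular, invertible, natural\<close>
   \<and> (\<forall>M\<in>cOb D1. globular_iso D (l M) (hc (U (T M)) M) M \<and> globular_iso D (r M) (hc M (U (S M))) M)
   \<and> (\<forall>\<alpha>\<in>cAr D1. c1 (l (ccod D1 \<alpha>)) (hcs (Usq (Tv \<alpha>)) \<alpha>) = c1 \<alpha> (l (cdom D1 \<alpha>)))
   \<and> (\<forall>\<alpha>\<in>cAr D1. c1 (r (ccod D1 \<alpha>)) (hcs \<alpha> (Usq (Sv \<alpha>))) = c1 \<alpha> (r (cdom D1 \<alpha>)))
   \<comment> \<open>pentagon\<close>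
   \<and> (\<forall>M\<in>cOb D1. \<forall>N\<in>cOb D1. \<forall>P\<in>cOb D1. \<forall>Q\<in>cOb D1. T M = S N \<and> T N = S P \<and> T P = S Q \<longrightarrow>
        c1 (a Q P (hc N M)) (a (hc Q P) N M)
        = c1 (hcs (i1 Q) (a P N M)) (c1 (a Q (hc P N) M) (hcs (a Q P N) (i1 M))))
   \<comment> \<open>triangle\<close>
   \<and> (\<forall>M\<in>cOb D1. \<forall>N\<in>cOb D1. T M = S N \<longrightarrow>
        c1 (hcs (i1 N) (l M)) (a N (U (T M)) M) = hcs (r N) (i1 M)))"

text \<open>The condition p1 \<odot> p2 \<cong> 1 is expressed via the unitors:
  p1 \<odot> p2 : fh \<odot> 1_A \<Rightarrow> 1_B \<odot> fh equals \<lambda>^{-1} \<circ> \<rho>, i.e. \<lambda> \<circ> (p1 \<odot> p2) = \<rho>.\<close>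

definition has_companion :: "('o, 'v, 'h, 's) dbl_data \<Rightarrow> 'v \<Rightarrow> bool" where
  "has_companion D f \<longleftrightarrow>
   (let D0 = dc_D0 D; D1 = dc_D1 D; A = cdom D0 f; B = ccod D0 f in
    \<exists>fh p1 p2. fh \<in> cOb D1 \<and> dc_hsrc D fh = A \<and> dc_htgt D fh = B
      \<and> p1 \<in> cAr D1 \<and> cdom D1 p1 = fh \<and> ccod D1 p1 = dc_unit D B
      \<and> dc_vsrc D p1 = f \<and> dc_vtgt D p1 = cid D0 B
      \<and> p2 \<in> cAr D1 \<and> cdom D1 p2 = dc_unit D A \<and> ccod D1 p2 = fh
      \<and> dc_vsrc D p2 = cid D0 A \<and> dc_vtgt D p2 = f
      \<and> ccomp D1 p1 p2 = dc_unitsq D f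
      \<and> ccomp D1 (dc_lunit D fh) (dc_hcompsq D p1 p2) = dc_runit D fh)"

text \<open>q2 \<odot> q1 : 1_A \<odot> fc \<Rightarrow> fc \<odot> 1_B; the condition q2 \<odot> q1 \<cong> 1 reads \<rho> \<circ> (q2 \<odot> q1) = \<lambda>.\<close>

definition has_conjoint :: "('o, 'v, 'h, 's) dbl_data \<Rightarrow> 'v \<Rightarrow> bool" where
  "has_conjoint D f \<longleftrightarrow>
   (let D0 = dc_D0 D; D1 = dc_D1 D; A = cdom D0 f; B = ccod D0 f in
    \<exists>fc q1 q2. fc \<in> cOb D1 \<and> dc_hsrc D fc = B \<and> dc_htgt D fc = A
      \<and> q1 \<in> cAr D1 \<and> cdom D1 q1 = fc \<and> ccod D1 q1 = dc_unit D B
      \<and> dc_vsrc D q1 = cid D0 B \<and> dc_vtgt D q1 = f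
      \<and> q2 \<in> cAr D1 \<and> cdom D1 q2 = dc_unit D A \<and> ccod D1 q2 = fc
      \<and> dc_vsrc D q2 = f \<and> dc_vtgt D q2 = cid D0 A
      \<and> ccomp D1 q1 q2 = dc_unitsq D f
      \<and> ccomp D1 (dc_runit D fc) (dc_hcompsq D q2 q1) = dc_lunit D fc)"

definition fibrant :: "('o, 'v, 'h, 's) dbl_data \<Rightarrow> bool" where
  "fibrant D \<longleftrightarrow> pseudo_double_category D \<and>
     (\<forall>f\<in>cAr (dc_D0 D). has_companion D f \<and> has_conjoint D f)"

definition endo_cat :: "('o, 'v, 'h, 's) dbl_data \<Rightarrow> ('h, 's) cat_data" where
  "endo_cat D =
    \<lparr> cOb = {M \<in> cOb (dc_D1 D). dc_hsrc D M = dc_htgt D M},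
      cAr = {\<alpha> \<in> cAr (dc_D1 D). dc_vsrc D \<alpha> = dc_vtgt D \<alpha>
               \<and> dc_hsrc D (cdom (dc_D1 D) \<alpha>) = dc_htgt D (cdom (dc_D1 D) \<alpha>)
               \<and> dc_hsrc D (ccod (dc_D1 D) \<alpha>) = dc_htgt D (ccod (dc_D1 D) \<alpha>)},
      cdom = cdom (dc_D1 D), ccod = ccod (dc_D1 D),
      ccomp = ccomp (dc_D1 D), cid = cid (dc_D1 D) \<rparr>"

end

theory Submission
  imports Defs
begin

(*
  A square of D1 has a vertical boundary in D0 x D0, and the horizontal endo-cells
  D1^bullet form the pullback of this boundary functor along the diagonal D0 -> D0 x D0.
  In a fibrant double category the boundary functor is itself a bifibration. For
  f : A -> B with companion f^ and conjoint f_, the square rho . (1_M (.) p1) : M (.) f^ => M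
  is cartesian over (f, id), and lambda . (q1 (.) 1_M) : f_ (.) M => M is cartesian over
  (id, f). The inverse correspondences are whiskerings with p2 and q2; that they are
  inverse uses the companion and conjoint equations together with Kelly's unit coherences.
  Composing both lifts gives a cartesian square f_ (.) M (.) f^ => M over (f, f) whose
  domain is again an endo-cell, hence it is cartesian for D1^bullet -> D0. Opcartesian
  lifts f^ (.) N (.) f_ are obtained dually.
*)

section \<open>Categories, product categories and cartesian morphisms\<close>

lemma categoryD:
  assumes "category C"
  shows cat_dom: "\<And>f. f \<in> cAr C \<Longrightarrow> cdom C f \<in> cOb C"
    and cat_cod: "\<And>f. f \<in> cAr C \<Longrightarrow> ccod C f \<in> cOb C"
    and cat_id: "\<And>a. a \<in> cOb C \<Longrightarrow> cid C a \<in> cAr C"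
    and cat_id_dom: "\<And>a. a \<in> cOb C \<Longrightarrow> cdom C (cid C a) = a"
    and cat_id_cod: "\<And>a. a \<in> cOb C \<Longrightarrow> ccod C (cid C a) = a"
    and cat_comp: "\<And>f g. f \<in> cAr C \<Longrightarrow> g \<in> cAr C \<Longrightarrow> ccod C f = cdom C g \<Longrightarrow> ccomp C g f \<in> cAr C"
    and cat_comp_dom: "\<And>f g. f \<in> cAr C \<Longrightarrow> g \<in> cAr C \<Longrightarrow> ccod C f = cdom C g \<Longrightarrow> cdom C (ccomp C g f) = cdom C f"
    and cat_comp_cod: "\<And>f g. f \<in> cAr C \<Longrightarrow> g \<in> cAr C \<Longrightarrow> ccod C f = cdom C g \<Longrightarrow> ccod C (ccomp C g f) = ccod C g"
    and cat_idr: "\<And>f a. f \<in> cAr C \<Longrightarrow> cdom C f = a \<Longrightarrow> ccomp C f (cid C a) = f"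
    and cat_idl: "\<And>f a. f \<in> cAr C \<Longrightarrow> ccod C f = a \<Longrightarrow> ccomp C (cid C a) f = f"
    and cat_assoc: "\<And>f g h. f \<in> cAr C \<Longrightarrow> g \<in> cAr C \<Longrightarrow> h \<in> cAr C \<Longrightarrow> ccod C f = cdom C g \<Longrightarrow> ccod C g = cdom C h \<Longrightarrow>
        ccomp C (ccomp C h g) f = ccomp C h (ccomp C g f)"
  using assms unfolding category_def by metis+

lemma functorD:
  assumes "functor C E Fo Fa"
  shows fun_ob: "\<And>a. a \<in> cOb C \<Longrightarrow> Fo a \<in> cOb E"
    and fun_ar: "\<And>f. f \<in> cAr C \<Longrightarrow> Fa f \<in> cAr E"
    and fun_dom: "\<And>f. f \<in> cAr C \<Longrightarrow> cdom E (Fa f) = Fo (cdom C f)"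
    and fun_cod: "\<And>f. f \<in> cAr C \<Longrightarrow> ccod E (Fa f) = Fo (ccod C f)"
    and fun_id: "\<And>a. a \<in> cOb C \<Longrightarrow> Fa (cid C a) = cid E (Fo a)"
    and fun_comp: "\<And>f g. f \<in> cAr C \<Longrightarrow> g \<in> cAr C \<Longrightarrow> ccod C f = cdom C g \<Longrightarrow> Fa (ccomp C g f) = ccomp E (Fa g) (Fa f)"
  using assms unfolding functor_def by blast+

definition product_cat :: "('o, 'a) cat_data \<Rightarrow> ('p, 'b) cat_data \<Rightarrow> ('o \<times> 'p, 'a \<times> 'b) cat_data" where
  "product_cat C E =
    \<lparr> cOb = cOb C \<times> cOb E, cAr = cAr C \<times> cAr E,
      cdom = map_prod (cdom C) (cdom E), ccod = map_prod (ccod C) (ccod E),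
      ccomp = (\<lambda>(g, g') (f, f'). (ccomp C g f, ccomp E g' f')),
      cid = map_prod (cid C) (cid E) \<rparr>"

lemma product_cat_simps [simp]:
  "cOb (product_cat C E) = cOb C \<times> cOb E"
  "cAr (product_cat C E) = cAr C \<times> cAr E"
  "cdom (product_cat C E) (f, f') = (cdom C f, cdom E f')"
  "ccod (product_cat C E) (f, f') = (ccod C f, ccod E f')"
  "ccomp (product_cat C E) (g, g') (f, f') = (ccomp C g f, ccomp E g' f')"
  "cid (product_cat C E) (a, a') = (cid C a, cid E a')"
  by (simp_all add: product_cat_def)

lemma category_product_cat:
  assumes "category C" and "category E"
  shows "category (product_cat C E)"
  using categoryD[OF assms(1)] categoryD[OF assms(2)] unfolding category_def by auto

lemma functor_pair:
  assumes "functor C D Fo Fa" and "functor C E Go Ga"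
  shows "functor C (product_cat D E) (\<lambda>a. (Fo a, Go a)) (\<lambda>f. (Fa f, Ga f))"
  using functorD[OF assms(1)] functorD[OF assms(2)] unfolding functor_def by auto

lemma cartesianI:
  assumes "\<phi> \<in> cAr C"
    and "\<And>\<psi> g. \<psi> \<in> cAr C \<Longrightarrow> ccod C \<psi> = ccod C \<phi> \<Longrightarrow> g \<in> cAr E \<Longrightarrow>
      ccod E g = cdom E (Fa \<phi>) \<Longrightarrow> Fa \<psi> = ccomp E (Fa \<phi>) g \<Longrightarrow>
      \<exists>\<chi>. \<chi> \<in> cAr C \<and> cdom C \<chi> = cdom C \<psi> \<and> ccod C \<chi> = cdom C \<phi> \<and> Fa \<chi> = g \<and> ccomp C \<phi> \<chi> = \<psi>"
    and "\<And>\<chi> \<chi>'. \<chi> \<in> cAr C \<Longrightarrow> \<chi>' \<in> cAr C \<Longrightarrow> ccod C \<chi> = cdom C \<phi> \<Longrightarrow> ccod C \<chi>' = cdom C \<phi> \<Longrightarrow>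
      cdom C \<chi> = cdom C \<chi>' \<Longrightarrow> Fa \<chi> = Fa \<chi>' \<Longrightarrow> ccomp C \<phi> \<chi> = ccomp C \<phi> \<chi>' \<Longrightarrow> \<chi> = \<chi>'"
  shows "cartesian C E Fa \<phi>"
  unfolding cartesian_def using assms by (smt (verit))

lemma cartesian_lift:
  assumes "cartesian C E Fa \<phi>" and "\<psi> \<in> cAr C" "ccod C \<psi> = ccod C \<phi>"
    and "g \<in> cAr E" "ccod E g = cdom E (Fa \<phi>)" "Fa \<psi> = ccomp E (Fa \<phi>) g"
  obtains \<chi> where "\<chi> \<in> cAr C" "cdom C \<chi> = cdom C \<psi>" "ccod C \<chi> = cdom C \<phi>" "Fa \<chi> = g" "ccomp C \<phi> \<chi> = \<psi>"
  using assms unfolding cartesian_def by blast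

lemma cartesian_unique:
  assumes C: "category C" and F: "functor C E Fo Fa" and \<phi>: "cartesian C E Fa \<phi>"
    and "\<chi> \<in> cAr C" "\<chi>' \<in> cAr C" "ccod C \<chi> = cdom C \<phi>" "ccod C \<chi>' = cdom C \<phi>"
    and "cdom C \<chi> = cdom C \<chi>'" "Fa \<chi> = Fa \<chi>'" "ccomp C \<phi> \<chi> = ccomp C \<phi> \<chi>'"
  shows "\<chi> = \<chi>'"
proof -
  have ar: "\<phi> \<in> cAr C" using \<phi> unfolding cartesian_def by blast
  note cat = categoryD[OF C] and fn = functorD[OF F]
  let ?\<psi> = "ccomp C \<phi> \<chi>"
  have "?\<psi> \<in> cAr C" "ccod C ?\<psi> = ccod C \<phi>" "Fa \<chi> \<in> cAr E" "ccod E (Fa \<chi>) = cdom E (Fa \<phi>)"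
    "Fa ?\<psi> = ccomp E (Fa \<phi>) (Fa \<chi>)"
    using assms ar cat fn by auto
  then have "\<exists>!\<chi>''. \<chi>'' \<in> cAr C \<and> cdom C \<chi>'' = cdom C ?\<psi> \<and> ccod C \<chi>'' = cdom C \<phi> \<and>
      Fa \<chi>'' = Fa \<chi> \<and> ccomp C \<phi> \<chi>'' = ?\<psi>"
    using \<phi> unfolding cartesian_def by blast
  then show ?thesis using assms ar cat by (metis (no_types, lifting))
qed

lemma cartesian_comp:
  assumes C: "category C" and E: "category E" and F: "functor C E Fo Fa"
    and \<phi>: "cartesian C E Fa \<phi>" and \<psi>: "cartesian C E Fa \<psi>" and \<psi>\<phi>: "ccod C \<psi> = cdom C \<phi>"
  shows "cartesian C E Fa (ccomp C \<phi> \<psi>)"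
proof -
  have ar: "\<phi> \<in> cAr C" "\<psi> \<in> cAr C" using \<phi> \<psi> unfolding cartesian_def by blast+
  note cat = categoryD[OF C] and cE = categoryD[OF E] and fn = functorD[OF F]
  have F\<phi>\<psi>: "Fa (ccomp C \<phi> \<psi>) = ccomp E (Fa \<phi>) (Fa \<psi>)" using fn ar \<psi>\<phi> by blast
  show ?thesis
  proof (rule cartesianI)
    show "ccomp C \<phi> \<psi> \<in> cAr C" using cat ar \<psi>\<phi> by blast
  next
    fix \<theta> g
    assume \<theta>: "\<theta> \<in> cAr C" "ccod C \<theta> = ccod C (ccomp C \<phi> \<psi>)"
      and g: "g \<in> cAr E" "ccod E g = cdom E (Fa (ccomp C \<phi> \<psi>))" "Fa \<theta> = ccomp E (Fa (ccomp C \<phi> \<psi>)) g"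
    have g': "ccod E g = cdom E (Fa \<psi>)" "ccomp E (Fa \<psi>) g \<in> cAr E"
      "ccod E (ccomp E (Fa \<psi>) g) = cdom E (Fa \<phi>)"
      using g F\<phi>\<psi> fn cE ar \<psi>\<phi> by auto
    have "Fa \<theta> = ccomp E (Fa \<phi>) (ccomp E (Fa \<psi>) g)"
      using g F\<phi>\<psi> g' cE fn ar \<psi>\<phi> by auto
    then obtain \<chi>1 where \<chi>1: "\<chi>1 \<in> cAr C" "cdom C \<chi>1 = cdom C \<theta>" "ccod C \<chi>1 = cdom C \<phi>"
        "Fa \<chi>1 = ccomp E (Fa \<psi>) g" "ccomp C \<phi> \<chi>1 = \<theta>"
      using cartesian_lift[OF \<phi> \<theta>(1) _ g'(2,3)] \<theta> cat ar \<psi>\<phi> by metis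
    obtain \<chi> where \<chi>: "\<chi> \<in> cAr C" "cdom C \<chi> = cdom C \<chi>1" "ccod C \<chi> = cdom C \<psi>" "Fa \<chi> = g" "ccomp C \<psi> \<chi> = \<chi>1"
      using cartesian_lift[OF \<psi> \<chi>1(1) _ g(1) g'(1) \<chi>1(4)] \<chi>1(3) \<psi>\<phi> by metis
    show "\<exists>\<chi>. \<chi> \<in> cAr C \<and> cdom C \<chi> = cdom C \<theta> \<and> ccod C \<chi> = cdom C (ccomp C \<phi> \<psi>) \<and>
        Fa \<chi> = g \<and> ccomp C (ccomp C \<phi> \<psi>) \<chi> = \<theta>"
      using \<chi> \<chi>1 cat ar \<psi>\<phi> by (intro exI[of _ \<chi>]) auto
  next
    fix \<chi> \<chi>'
    assume \<chi>: "\<chi> \<in> cAr C" "\<chi>' \<in> cAr C" "ccod C \<chi> = cdom C (ccomp C \<phi> \<psi>)"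
      "ccod C \<chi>' = cdom C (ccomp C \<phi> \<psi>)" "cdom C \<chi> = cdom C \<chi>'" "Fa \<chi> = Fa \<chi>'"
      and eq: "ccomp C (ccomp C \<phi> \<psi>) \<chi> = ccomp C (ccomp C \<phi> \<psi>) \<chi>'"
    have "ccomp C \<psi> \<chi> = ccomp C \<psi> \<chi>'"
      by (rule cartesian_unique[OF C F \<phi>]) (use \<chi> eq ar \<psi>\<phi> cat fn in auto)
    then show "\<chi> = \<chi>'"
      by (rule cartesian_unique[OF C F \<psi>, rotated -1]) (use \<chi> ar \<psi>\<phi> cat in auto)
  qed
qed

lemma opcartesianI:
  assumes "\<phi> \<in> cAr C"
    and "\<And>\<psi> h. \<psi> \<in> cAr C \<Longrightarrow> cdom C \<psi> = cdom C \<phi> \<Longrightarrow> h \<in> cAr E \<Longrightarrow>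
      cdom E h = ccod E (Fa \<phi>) \<Longrightarrow> Fa \<psi> = ccomp E h (Fa \<phi>) \<Longrightarrow>
      \<exists>\<chi>. \<chi> \<in> cAr C \<and> cdom C \<chi> = ccod C \<phi> \<and> ccod C \<chi> = ccod C \<psi> \<and> Fa \<chi> = h \<and> ccomp C \<chi> \<phi> = \<psi>"
    and "\<And>\<chi> \<chi>'. \<chi> \<in> cAr C \<Longrightarrow> \<chi>' \<in> cAr C \<Longrightarrow> cdom C \<chi> = ccod C \<phi> \<Longrightarrow> cdom C \<chi>' = ccod C \<phi> \<Longrightarrow>
      ccod C \<chi> = ccod C \<chi>' \<Longrightarrow> Fa \<chi> = Fa \<chi>' \<Longrightarrow> ccomp C \<chi> \<phi> = ccomp C \<chi>' \<phi> \<Longrightarrow> \<chi> = \<chi>'"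
  shows "opcartesian C E Fa \<phi>"
  unfolding opcartesian_def using assms by (smt (verit))

lemma opcartesian_lift:
  assumes "opcartesian C E Fa \<phi>" and "\<psi> \<in> cAr C" "cdom C \<psi> = cdom C \<phi>"
    and "h \<in> cAr E" "cdom E h = ccod E (Fa \<phi>)" "Fa \<psi> = ccomp E h (Fa \<phi>)"
  obtains \<chi> where "\<chi> \<in> cAr C" "cdom C \<chi> = ccod C \<phi>" "ccod C \<chi> = ccod C \<psi>" "Fa \<chi> = h" "ccomp C \<chi> \<phi> = \<psi>"
  using assms unfolding opcartesian_def by blast

lemma opcartesian_unique:
  assumes C: "category C" and F: "functor C E Fo Fa" and \<phi>: "opcartesian C E Fa \<phi>"
    and "\<chi> \<in> cAr C" "\<chi>' \<in> cAr C" "cdom C \<chi> = ccod C \<phi>" "cdom C \<chi>' = ccod C \<phi>"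
    and "ccod C \<chi> = ccod C \<chi>'" "Fa \<chi> = Fa \<chi>'" "ccomp C \<chi> \<phi> = ccomp C \<chi>' \<phi>"
  shows "\<chi> = \<chi>'"
proof -
  have ar: "\<phi> \<in> cAr C" using \<phi> unfolding opcartesian_def by blast
  note cat = categoryD[OF C] and fn = functorD[OF F]
  let ?\<psi> = "ccomp C \<chi> \<phi>"
  have "?\<psi> \<in> cAr C" "cdom C ?\<psi> = cdom C \<phi>" "Fa \<chi> \<in> cAr E" "cdom E (Fa \<chi>) = ccod E (Fa \<phi>)"
    "Fa ?\<psi> = ccomp E (Fa \<chi>) (Fa \<phi>)"
    using assms ar cat fn by auto
  then have "\<exists>!\<chi>''. \<chi>'' \<in> cAr C \<and> cdom C \<chi>'' = ccod C \<phi> \<and> ccod C \<chi>'' = ccod C ?\<psi> \<and>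
      Fa \<chi>'' = Fa \<chi> \<and> ccomp C \<chi>'' \<phi> = ?\<psi>"
    using \<phi> unfolding opcartesian_def by blast
  then show ?thesis using assms ar cat by (metis (no_types, lifting))
qed

lemma opcartesian_comp:
  assumes C: "category C" and E: "category E" and F: "functor C E Fo Fa"
    and \<phi>: "opcartesian C E Fa \<phi>" and \<psi>: "opcartesian C E Fa \<psi>" and \<phi>\<psi>: "ccod C \<phi> = cdom C \<psi>"
  shows "opcartesian C E Fa (ccomp C \<psi> \<phi>)"
proof -
  have ar: "\<phi> \<in> cAr C" "\<psi> \<in> cAr C" using \<phi> \<psi> unfolding opcartesian_def by blast+
  note cat = categoryD[OF C] and cE = categoryD[OF E] and fn = functorD[OF F]
  have F\<psi>\<phi>: "Fa (ccomp C \<psi> \<phi>) = ccomp E (Fa \<psi>) (Fa \<phi>)" using fn ar \<phi>\<psi> by blast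
  show ?thesis
  proof (rule opcartesianI)
    show "ccomp C \<psi> \<phi> \<in> cAr C" using cat ar \<phi>\<psi> by blast
  next
    fix \<theta> h
    assume \<theta>: "\<theta> \<in> cAr C" "cdom C \<theta> = cdom C (ccomp C \<psi> \<phi>)"
      and h: "h \<in> cAr E" "cdom E h = ccod E (Fa (ccomp C \<psi> \<phi>))" "Fa \<theta> = ccomp E h (Fa (ccomp C \<psi> \<phi>))"
    have h': "cdom E h = ccod E (Fa \<psi>)" "ccomp E h (Fa \<psi>) \<in> cAr E"
      "cdom E (ccomp E h (Fa \<psi>)) = ccod E (Fa \<phi>)"
      using h F\<psi>\<phi> fn cE ar \<phi>\<psi> by auto
    have "Fa \<theta> = ccomp E (ccomp E h (Fa \<psi>)) (Fa \<phi>)"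
      using h F\<psi>\<phi> h' cE fn ar \<phi>\<psi> by auto
    then obtain \<chi>1 where \<chi>1: "\<chi>1 \<in> cAr C" "cdom C \<chi>1 = ccod C \<phi>" "ccod C \<chi>1 = ccod C \<theta>"
        "Fa \<chi>1 = ccomp E h (Fa \<psi>)" "ccomp C \<chi>1 \<phi> = \<theta>"
      using opcartesian_lift[OF \<phi> \<theta>(1) _ h'(2,3)] \<theta> cat ar \<phi>\<psi> by metis
    obtain \<chi> where \<chi>: "\<chi> \<in> cAr C" "cdom C \<chi> = ccod C \<psi>" "ccod C \<chi> = ccod C \<chi>1" "Fa \<chi> = h" "ccomp C \<chi> \<psi> = \<chi>1"
      using opcartesian_lift[OF \<psi> \<chi>1(1) _ h(1) h'(1) \<chi>1(4)] \<chi>1(2) \<phi>\<psi> by metis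
    show "\<exists>\<chi>. \<chi> \<in> cAr C \<and> cdom C \<chi> = ccod C (ccomp C \<psi> \<phi>) \<and> ccod C \<chi> = ccod C \<theta> \<and>
        Fa \<chi> = h \<and> ccomp C \<chi> (ccomp C \<psi> \<phi>) = \<theta>"
      using \<chi> \<chi>1 cat ar \<phi>\<psi> by (intro exI[of _ \<chi>]) (auto simp flip: cat_assoc)
  next
    fix \<chi> \<chi>'
    assume \<chi>: "\<chi> \<in> cAr C" "\<chi>' \<in> cAr C" "cdom C \<chi> = ccod C (ccomp C \<psi> \<phi>)"
      "cdom C \<chi>' = ccod C (ccomp C \<psi> \<phi>)" "ccod C \<chi> = ccod C \<chi>'" "Fa \<chi> = Fa \<chi>'"
      and eq: "ccomp C \<chi> (ccomp C \<psi> \<phi>) = ccomp C \<chi>' (ccomp C \<psi> \<phi>)"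
    have "ccomp C \<chi> \<psi> = ccomp C \<chi>' \<psi>"
      by (rule opcartesian_unique[OF C F \<phi>]) (use \<chi> eq ar \<phi>\<psi> cat fn in \<open>auto simp flip: cat_assoc\<close>)
    then show "\<chi> = \<chi>'"
      by (rule opcartesian_unique[OF C F \<psi>, rotated -1]) (use \<chi> ar \<phi>\<psi> cat in auto)
  qed
qed

lemma cat_comp_left_inverse:
  assumes C: "category C" and "f \<in> cAr C" "g \<in> cAr C" "X \<in> cAr C" "ccod C X = cdom C f" "ccod C f = cdom C g"
    and "ccomp C g f = cid C (cdom C f)"
  shows "ccomp C g (ccomp C f X) = X"
  using cat_assoc[OF C, of X f g] cat_idl[OF C, of X] assms by simp

lemma split_epi_cancel:
  assumes C: "category C" and "f \<in> cAr C" "g \<in> cAr C" "X \<in> cAr C" "Y \<in> cAr C" "ccod C g = cdom C f"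
    "cdom C X = ccod C f" "cdom C Y = ccod C f" and "ccomp C f g = cid C (ccod C f)"
    and "ccomp C X f = ccomp C Y f"
  shows "X = Y"
  using cat_assoc[OF C, of g f X] cat_assoc[OF C, of g f Y] cat_idr[OF C, of X] cat_idr[OF C, of Y] assms
  by metis

lemma split_mono_cancel:
  assumes C: "category C" and "f \<in> cAr C" "g \<in> cAr C" "X \<in> cAr C" "Y \<in> cAr C" "ccod C f = cdom C g"
    "ccod C X = cdom C f" "ccod C Y = cdom C f" and "ccomp C g f = cid C (cdom C f)"
    and "ccomp C f X = ccomp C f Y"
  shows "X = Y"
  by (metis assms cat_comp_left_inverse)

lemma cat_comp_assoc_eq:
  assumes C: "category C" and "ccomp C a b = c"
    and "z \<in> cAr C" "b \<in> cAr C" "a \<in> cAr C" "ccod C z = cdom C b" "ccod C b = cdom C a"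
  shows "ccomp C a (ccomp C b z) = ccomp C c z"
  using cat_assoc[OF C, of z b a] assms by simp

section \<open>Pseudo double categories\<close>

locale pseudo_double =
  fixes D :: "('o, 'v, 'h, 's) dbl_data"
  assumes pseudo_double: "pseudo_double_category D"
begin

abbreviation "D0 \<equiv> dc_D0 D"
abbreviation "D1 \<equiv> dc_D1 D"
abbreviation "Ob0 \<equiv> cOb D0"
abbreviation "Ar0 \<equiv> cAr D0"
abbreviation "d0 \<equiv> cdom D0"
abbreviation "c0 \<equiv> ccod D0"
abbreviation "k0 \<equiv> ccomp D0"
abbreviation "e0 \<equiv> cid D0"
abbreviation "Ob1 \<equiv> cOb D1"
abbreviation "Ar1 \<equiv> cAr D1"
abbreviation "d1 \<equiv> cdom D1"
abbreviation "c1 \<equiv> ccod D1"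
abbreviation "k1 \<equiv> ccomp D1"
abbreviation "e1 \<equiv> cid D1"
abbreviation "Sh \<equiv> dc_hsrc D"
abbreviation "Th \<equiv> dc_htgt D"
abbreviation "Sv \<equiv> dc_vsrc D"
abbreviation "Tv \<equiv> dc_vtgt D"
abbreviation "Uh \<equiv> dc_unit D"
abbreviation "Us \<equiv> dc_unitsq D"
abbreviation "hc \<equiv> dc_hcomp D"
abbreviation "hs \<equiv> dc_hcompsq D"
abbreviation "aa \<equiv> dc_assoc D"
abbreviation "ll \<equiv> dc_lunit D"
abbreviation "rr \<equiv> dc_runit D"

lemma pseudo_double_ax:
  shows cat0: "category D0" and cat1: "category D1"
    and funS: "functor D1 D0 Sh Sv" and funT: "functor D1 D0 Th Tv" and funU: "functor D0 D1 Uh Us"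
    and unit_ax: "\<forall>A\<in>Ob0. Sh (Uh A) = A \<and> Th (Uh A) = A"
    and unitsq_ax: "\<forall>f\<in>Ar0. Sv (Us f) = f \<and> Tv (Us f) = f"
    and hcomp_ax: "\<forall>M\<in>Ob1. \<forall>N\<in>Ob1. Th M = Sh N \<longrightarrow>
        hc N M \<in> Ob1 \<and> Sh (hc N M) = Sh M \<and> Th (hc N M) = Th N"
    and hcompsq_ax: "\<forall>\<alpha>\<in>Ar1. \<forall>\<beta>\<in>Ar1. Tv \<alpha> = Sv \<beta> \<longrightarrow>
        hs \<beta> \<alpha> \<in> Ar1 \<and> d1 (hs \<beta> \<alpha>) = hc (d1 \<beta>) (d1 \<alpha>) \<and> c1 (hs \<beta> \<alpha>) = hc (c1 \<beta>) (c1 \<alpha>)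
        \<and> Sv (hs \<beta> \<alpha>) = Sv \<alpha> \<and> Tv (hs \<beta> \<alpha>) = Tv \<beta>"
    and hcompsq_id_ax: "\<forall>M\<in>Ob1. \<forall>N\<in>Ob1. Th M = Sh N \<longrightarrow> hs (e1 N) (e1 M) = e1 (hc N M)"
    and interchange_ax: "\<forall>\<alpha>\<in>Ar1. \<forall>\<alpha>'\<in>Ar1. \<forall>\<beta>\<in>Ar1. \<forall>\<beta>'\<in>Ar1.
        c1 \<alpha> = d1 \<alpha>' \<and> c1 \<beta> = d1 \<beta>' \<and> Tv \<alpha> = Sv \<beta> \<and> Tv \<alpha>' = Sv \<beta>' \<longrightarrow>
        hs (k1 \<beta>' \<beta>) (k1 \<alpha>' \<alpha>) = k1 (hs \<beta>' \<alpha>') (hs \<beta> \<alpha>)"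
    and assoc_globular_ax: "\<forall>M\<in>Ob1. \<forall>N\<in>Ob1. \<forall>P\<in>Ob1. Th M = Sh N \<and> Th N = Sh P \<longrightarrow>
        globular_iso D (aa P N M) (hc (hc P N) M) (hc P (hc N M))"
    and assoc_natural_ax: "\<forall>\<alpha>\<in>Ar1. \<forall>\<beta>\<in>Ar1. \<forall>\<gamma>\<in>Ar1. Tv \<alpha> = Sv \<beta> \<and> Tv \<beta> = Sv \<gamma> \<longrightarrow>
        k1 (aa (c1 \<gamma>) (c1 \<beta>) (c1 \<alpha>)) (hs (hs \<gamma> \<beta>) \<alpha>) = k1 (hs \<gamma> (hs \<beta> \<alpha>)) (aa (d1 \<gamma>) (d1 \<beta>) (d1 \<alpha>))"
    and unitors_globular_ax: "\<forall>M\<in>Ob1. globular_iso D (ll M) (hc (Uh (Th M)) M) M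
        \<and> globular_iso D (rr M) (hc M (Uh (Sh M))) M"
    and lunit_natural_ax: "\<forall>\<alpha>\<in>Ar1. k1 (ll (c1 \<alpha>)) (hs (Us (Tv \<alpha>)) \<alpha>) = k1 \<alpha> (ll (d1 \<alpha>))"
    and runit_natural_ax: "\<forall>\<alpha>\<in>Ar1. k1 (rr (c1 \<alpha>)) (hs \<alpha> (Us (Sv \<alpha>))) = k1 \<alpha> (rr (d1 \<alpha>))"
    and pentagon_ax: "\<forall>M\<in>Ob1. \<forall>N\<in>Ob1. \<forall>P\<in>Ob1. \<forall>Q\<in>Ob1. Th M = Sh N \<and> Th N = Sh P \<and> Th P = Sh Q \<longrightarrow>
        k1 (aa Q P (hc N M)) (aa (hc Q P) N M)
        = k1 (hs (e1 Q) (aa P N M)) (k1 (aa Q (hc P N) M) (hs (aa Q P N) (e1 M)))"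
    and triangle_ax: "\<forall>M\<in>Ob1. \<forall>N\<in>Ob1. Th M = Sh N \<longrightarrow>
        k1 (hs (e1 N) (ll M)) (aa N (Uh (Th M)) M) = hs (rr N) (e1 M)"
  by (insert pseudo_double, unfold pseudo_double_category_def Let_def, (elim conjE, assumption)+)

lemmas cat0_simps [simp] = categoryD[OF cat0]
lemmas cat1_simps [simp] = categoryD[OF cat1]
lemmas funS_simps [simp] = functorD[OF funS]
lemmas funT_simps [simp] = functorD[OF funT]
lemmas funU_simps [simp] = functorD[OF funU]

lemma Uh_S [simp]: "A \<in> Ob0 \<Longrightarrow> Sh (Uh A) = A" and Uh_T [simp]: "A \<in> Ob0 \<Longrightarrow> Th (Uh A) = A"
  using unit_ax by auto

lemma Us_S [simp]: "f \<in> Ar0 \<Longrightarrow> Sv (Us f) = f" and Us_T [simp]: "f \<in> Ar0 \<Longrightarrow> Tv (Us f) = f"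
  using unitsq_ax by auto

lemma hc_ob [simp]: "M \<in> Ob1 \<Longrightarrow> N \<in> Ob1 \<Longrightarrow> Th M = Sh N \<Longrightarrow> hc N M \<in> Ob1"
  and hc_S [simp]: "M \<in> Ob1 \<Longrightarrow> N \<in> Ob1 \<Longrightarrow> Th M = Sh N \<Longrightarrow> Sh (hc N M) = Sh M"
  and hc_T [simp]: "M \<in> Ob1 \<Longrightarrow> N \<in> Ob1 \<Longrightarrow> Th M = Sh N \<Longrightarrow> Th (hc N M) = Th N"
  using hcomp_ax by auto

lemma hs_ar [simp]: "\<alpha> \<in> Ar1 \<Longrightarrow> \<beta> \<in> Ar1 \<Longrightarrow> Tv \<alpha> = Sv \<beta> \<Longrightarrow> hs \<beta> \<alpha> \<in> Ar1"
  and hs_d [simp]: "\<alpha> \<in> Ar1 \<Longrightarrow> \<beta> \<in> Ar1 \<Longrightarrow> Tv \<alpha> = Sv \<beta> \<Longrightarrow> d1 (hs \<beta> \<alpha>) = hc (d1 \<beta>) (d1 \<alpha>)"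
  and hs_c [simp]: "\<alpha> \<in> Ar1 \<Longrightarrow> \<beta> \<in> Ar1 \<Longrightarrow> Tv \<alpha> = Sv \<beta> \<Longrightarrow> c1 (hs \<beta> \<alpha>) = hc (c1 \<beta>) (c1 \<alpha>)"
  and hs_S [simp]: "\<alpha> \<in> Ar1 \<Longrightarrow> \<beta> \<in> Ar1 \<Longrightarrow> Tv \<alpha> = Sv \<beta> \<Longrightarrow> Sv (hs \<beta> \<alpha>) = Sv \<alpha>"
  and hs_T [simp]: "\<alpha> \<in> Ar1 \<Longrightarrow> \<beta> \<in> Ar1 \<Longrightarrow> Tv \<alpha> = Sv \<beta> \<Longrightarrow> Tv (hs \<beta> \<alpha>) = Tv \<beta>"
  using hcompsq_ax by auto

lemmas hs_e1 [simp] = hcompsq_id_ax[rule_format]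
  and interchange = interchange_ax[rule_format, OF _ _ _ _ conjI[OF _ conjI[OF _ conjI]]]
  and assoc_globular = assoc_globular_ax[rule_format, OF _ _ _ conjI]
  and assoc_natural = assoc_natural_ax[rule_format, OF _ _ _ conjI]
  and lunit_natural = lunit_natural_ax[rule_format] and runit_natural = runit_natural_ax[rule_format]
  and pentagon = pentagon_ax[rule_format, OF _ _ _ _ conjI[OF _ conjI]]
  and triangle = triangle_ax[rule_format]

lemma lunit_globular: "M \<in> Ob1 \<Longrightarrow> globular_iso D (ll M) (hc (Uh (Th M)) M) M"
  and runit_globular: "M \<in> Ob1 \<Longrightarrow> globular_iso D (rr M) (hc M (Uh (Sh M))) M"
  using unitors_globular_ax by auto

lemma globular_isoD:
  assumes "globular_iso D \<alpha> M N"
  shows "\<alpha> \<in> Ar1 \<and> d1 \<alpha> = M \<and> c1 \<alpha> = N \<and> Sv \<alpha> = e0 (Sh M) \<and> Tv \<alpha> = e0 (Th M)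
    \<and> (\<exists>\<beta>\<in>Ar1. d1 \<beta> = N \<and> c1 \<beta> = M \<and> k1 \<beta> \<alpha> = e1 M \<and> k1 \<alpha> \<beta> = e1 N)"
  using assms unfolding globular_iso_def iso_def by auto

definition vinv :: "'s \<Rightarrow> 's" where
  "vinv \<alpha> = (SOME \<beta>. \<beta> \<in> Ar1 \<and> d1 \<beta> = c1 \<alpha> \<and> c1 \<beta> = d1 \<alpha> \<and> k1 \<beta> \<alpha> = e1 (d1 \<alpha>) \<and> k1 \<alpha> \<beta> = e1 (c1 \<alpha>))"

lemma vinv_globular:
  assumes iso: "globular_iso D \<alpha> M N" and "M \<in> Ob1" "N \<in> Ob1" "Sh N = Sh M" "Th N = Th M"
  shows "vinv \<alpha> \<in> Ar1 \<and> d1 (vinv \<alpha>) = N \<and> c1 (vinv \<alpha>) = M \<and> k1 (vinv \<alpha>) \<alpha> = e1 M \<and> k1 \<alpha> (vinv \<alpha>) = e1 N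
     \<and> Sv (vinv \<alpha>) = e0 (Sh M) \<and> Tv (vinv \<alpha>) = e0 (Th M)"
proof -
  obtain \<beta> where "\<beta> \<in> Ar1" "d1 \<beta> = N" "c1 \<beta> = M" "k1 \<beta> \<alpha> = e1 M" "k1 \<alpha> \<beta> = e1 N"
    and \<alpha>: "\<alpha> \<in> Ar1" "d1 \<alpha> = M" "c1 \<alpha> = N" "Sv \<alpha> = e0 (Sh M)" "Tv \<alpha> = e0 (Th M)"
    using globular_isoD[OF iso] by blast
  then have "\<exists>\<beta>. \<beta> \<in> Ar1 \<and> d1 \<beta> = c1 \<alpha> \<and> c1 \<beta> = d1 \<alpha> \<and> k1 \<beta> \<alpha> = e1 (d1 \<alpha>) \<and> k1 \<alpha> \<beta> = e1 (c1 \<alpha>)"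
    by auto
  from someI_ex[OF this]
  have inv: "vinv \<alpha> \<in> Ar1" "d1 (vinv \<alpha>) = N" "c1 (vinv \<alpha>) = M" "k1 (vinv \<alpha>) \<alpha> = e1 M" "k1 \<alpha> (vinv \<alpha>) = e1 N"
    unfolding vinv_def[symmetric] using \<alpha> by simp_all
  have "Sv (k1 \<alpha> (vinv \<alpha>)) = k0 (Sv \<alpha>) (Sv (vinv \<alpha>))"
    by (rule fun_comp[OF funS]) (use inv \<alpha> in simp_all)
  moreover have "Tv (k1 \<alpha> (vinv \<alpha>)) = k0 (Tv \<alpha>) (Tv (vinv \<alpha>))"
    by (rule fun_comp[OF funT]) (use inv \<alpha> in simp_all)
  ultimately show ?thesis using inv \<alpha> assms by simp
qed

abbreviation "ai Q N M \<equiv> vinv (aa Q N M)"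
abbreviation "li M \<equiv> vinv (ll M)"
abbreviation "ri M \<equiv> vinv (rr M)"

lemma assoc_simps [simp]:
  assumes "M \<in> Ob1" "N \<in> Ob1" "Q \<in> Ob1" "Th M = Sh N" "Th N = Sh Q"
  shows "aa Q N M \<in> Ar1" "d1 (aa Q N M) = hc (hc Q N) M" "c1 (aa Q N M) = hc Q (hc N M)"
    "Sv (aa Q N M) = e0 (Sh M)" "Tv (aa Q N M) = e0 (Th Q)"
    "ai Q N M \<in> Ar1" "d1 (ai Q N M) = hc Q (hc N M)" "c1 (ai Q N M) = hc (hc Q N) M"
    "Sv (ai Q N M) = e0 (Sh M)" "Tv (ai Q N M) = e0 (Th Q)"
    "k1 (ai Q N M) (aa Q N M) = e1 (hc (hc Q N) M)" "k1 (aa Q N M) (ai Q N M) = e1 (hc Q (hc N M))"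
  using globular_isoD[OF assoc_globular] vinv_globular[OF assoc_globular] assms by simp_all

lemma lunit_simps [simp]:
  assumes "M \<in> Ob1"
  shows "ll M \<in> Ar1" "d1 (ll M) = hc (Uh (Th M)) M" "c1 (ll M) = M" "Sv (ll M) = e0 (Sh M)" "Tv (ll M) = e0 (Th M)"
    "li M \<in> Ar1" "d1 (li M) = M" "c1 (li M) = hc (Uh (Th M)) M" "Sv (li M) = e0 (Sh M)" "Tv (li M) = e0 (Th M)"
    "k1 (li M) (ll M) = e1 (hc (Uh (Th M)) M)" "k1 (ll M) (li M) = e1 M"
  using globular_isoD[OF lunit_globular] vinv_globular[OF lunit_globular] assms by simp_all

lemma runit_simps [simp]:
  assumes "M \<in> Ob1"
  shows "rr M \<in> Ar1" "d1 (rr M) = hc M (Uh (Sh M))" "c1 (rr M) = M" "Sv (rr M) = e0 (Sh M)" "Tv (rr M) = e0 (Th M)"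
    "ri M \<in> Ar1" "d1 (ri M) = M" "c1 (ri M) = hc M (Uh (Sh M))" "Sv (ri M) = e0 (Sh M)" "Tv (ri M) = e0 (Th M)"
    "k1 (ri M) (rr M) = e1 (hc M (Uh (Sh M)))" "k1 (rr M) (ri M) = e1 M"
  using globular_isoD[OF runit_globular] vinv_globular[OF runit_globular] assms by simp_all

lemma coherence_cancel_simps [simp]:
  assumes "M \<in> Ob1" "X \<in> Ar1"
  shows "Th M = Sh N \<Longrightarrow> N \<in> Ob1 \<Longrightarrow> Q \<in> Ob1 \<Longrightarrow> Th N = Sh Q \<Longrightarrow> c1 X = hc (hc Q N) M \<Longrightarrow>
      k1 (ai Q N M) (k1 (aa Q N M) X) = X"
    and "Th M = Sh N \<Longrightarrow> N \<in> Ob1 \<Longrightarrow> Q \<in> Ob1 \<Longrightarrow> Th N = Sh Q \<Longrightarrow> c1 X = hc Q (hc N M) \<Longrightarrow>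
      k1 (aa Q N M) (k1 (ai Q N M) X) = X"
    and "c1 X = hc (Uh (Th M)) M \<Longrightarrow> k1 (li M) (k1 (ll M) X) = X"
    and "c1 X = M \<Longrightarrow> k1 (ll M) (k1 (li M) X) = X"
    and "c1 X = hc M (Uh (Sh M)) \<Longrightarrow> k1 (ri M) (k1 (rr M) X) = X"
    and "c1 X = M \<Longrightarrow> k1 (rr M) (k1 (ri M) X) = X"
  by (rule cat_comp_left_inverse[OF cat1]; use assms in simp)+

lemma whisker_left:
  "\<alpha> \<in> Ar1 \<Longrightarrow> \<alpha>' \<in> Ar1 \<Longrightarrow> N \<in> Ob1 \<Longrightarrow> c1 \<alpha> = d1 \<alpha>' \<Longrightarrow> Tv \<alpha> = e0 (Sh N) \<Longrightarrow> Tv \<alpha>' = e0 (Sh N) \<Longrightarrow>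
   hs (e1 N) (k1 \<alpha>' \<alpha>) = k1 (hs (e1 N) \<alpha>') (hs (e1 N) \<alpha>)"
  using interchange[of \<alpha> \<alpha>' "e1 N" "e1 N"] by simp

lemma whisker_right:
  "\<beta> \<in> Ar1 \<Longrightarrow> \<beta>' \<in> Ar1 \<Longrightarrow> M \<in> Ob1 \<Longrightarrow> c1 \<beta> = d1 \<beta>' \<Longrightarrow> Sv \<beta> = e0 (Th M) \<Longrightarrow> Sv \<beta>' = e0 (Th M) \<Longrightarrow>
   hs (k1 \<beta>' \<beta>) (e1 M) = k1 (hs \<beta>' (e1 M)) (hs \<beta> (e1 M))"
  using interchange[of "e1 M" "e1 M" \<beta> \<beta>'] by simp

lemma unit_hcomp_cancel:
  assumes "\<alpha> \<in> Ar1" "\<alpha>' \<in> Ar1" "d1 \<alpha> = d1 \<alpha>'" "c1 \<alpha> = c1 \<alpha>'" "Tv \<alpha> = Tv \<alpha>'"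
    and "hs (Us (Tv \<alpha>)) \<alpha> = hs (Us (Tv \<alpha>')) \<alpha>'"
  shows "\<alpha> = \<alpha>'"
proof -
  have eq': "k1 \<alpha> (ll (d1 \<alpha>)) = k1 \<alpha>' (ll (d1 \<alpha>))"
    using lunit_natural[OF assms(1)] lunit_natural[OF assms(2)] assms by simp
  show ?thesis
    by (rule split_epi_cancel[OF cat1 _ _ _ _ _ _ _ _ eq', where g = "li (d1 \<alpha>)"]) (use assms in simp_all)
qed

lemma hcomp_unit_cancel:
  assumes "\<alpha> \<in> Ar1" "\<alpha>' \<in> Ar1" "d1 \<alpha> = d1 \<alpha>'" "c1 \<alpha> = c1 \<alpha>'" "Sv \<alpha> = Sv \<alpha>'"
    and "hs \<alpha> (Us (Sv \<alpha>)) = hs \<alpha>' (Us (Sv \<alpha>'))"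
  shows "\<alpha> = \<alpha>'"
proof -
  have eq': "k1 \<alpha> (rr (d1 \<alpha>)) = k1 \<alpha>' (rr (d1 \<alpha>))"
    using runit_natural[OF assms(1)] runit_natural[OF assms(2)] assms by simp
  show ?thesis
    by (rule split_epi_cancel[OF cat1 _ _ _ _ _ _ _ _ eq', where g = "ri (d1 \<alpha>)"]) (use assms in simp_all)
qed

(* Kelly's unit coherences. Pentagon and triangle only give them after whiskering
   with a unit cell, which is then cancelled by unit_hcomp_cancel / hcomp_unit_cancel. *)
lemma lunit_hcomp_whiskered:
  assumes M: "M \<in> Ob1" and N: "N \<in> Ob1" and MN: "Th M = Sh N"
  shows "hs (e1 (Uh (Th N))) (k1 (ll (hc N M)) (aa (Uh (Th N)) N M)) = hs (e1 (Uh (Th N))) (hs (ll N) (e1 M))"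
proof -
  define I where "I = Uh (Th N)"
  have I: "I \<in> Ob1" "Sh I = Th N" "Th I = Th N" using N by (simp_all add: I_def)
  have UI: "Uh (Th N) = I" by (simp add: I_def)
  note ob = M N MN I UI
  define B where "B = hs (ai I I N) (e1 M)"
  define X where "X = k1 (aa I (hc I N) M) (hs (aa I I N) (e1 M))"
  have s1: "hs (e1 I) (k1 (ll (hc N M)) (aa I N M)) = k1 (hs (e1 I) (ll (hc N M))) (hs (e1 I) (aa I N M))"
    by (rule whisker_left) (use ob in simp_all)
  have p: "k1 (aa I I (hc N M)) (aa (hc I I) N M) = k1 (hs (e1 I) (aa I N M)) X"
    unfolding X_def by (rule pentagon) (use ob in simp_all)
  have tr1: "k1 (hs (e1 I) (ll (hc N M))) (aa I I (hc N M)) = hs (rr I) (e1 (hc N M))"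
    using triangle[of "hc N M" I] ob by simp
  have an1: "k1 (aa I N M) (hs (hs (rr I) (e1 N)) (e1 M)) = k1 (hs (rr I) (e1 (hc N M))) (aa (hc I I) N M)"
    using assoc_natural[of "e1 M" "e1 N" "rr I"] ob by simp
  have L: "k1 (hs (e1 I) (k1 (ll (hc N M)) (aa I N M))) X = k1 (aa I N M) (hs (hs (rr I) (e1 N)) (e1 M))"
  proof -
    have "k1 (hs (e1 I) (k1 (ll (hc N M)) (aa I N M))) X
        = k1 (hs (e1 I) (ll (hc N M))) (k1 (hs (e1 I) (aa I N M)) X)"
      unfolding s1 X_def by (rule cat_assoc[OF cat1]) (use ob in simp_all)
    also have "\<dots> = k1 (hs (e1 I) (ll (hc N M))) (k1 (aa I I (hc N M)) (aa (hc I I) N M))"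
      by (simp only: p)
    also have "\<dots> = k1 (k1 (hs (e1 I) (ll (hc N M))) (aa I I (hc N M))) (aa (hc I I) N M)"
      by (rule cat_assoc[OF cat1, symmetric]) (use ob in simp_all)
    also have "\<dots> = k1 (hs (rr I) (e1 (hc N M))) (aa (hc I I) N M)" by (simp only: tr1)
    finally show ?thesis using an1 by simp
  qed
  have an2: "k1 (aa I N M) (hs (hs (e1 I) (ll N)) (e1 M)) = k1 (hs (e1 I) (hs (ll N) (e1 M))) (aa I (hc I N) M)"
    using assoc_natural[of "e1 M" "ll N" "e1 I"] ob by simp
  have tr2: "k1 (hs (e1 I) (ll N)) (aa I I N) = hs (rr I) (e1 N)"
    using triangle[of N I] ob by simp
  have R: "k1 (hs (e1 I) (hs (ll N) (e1 M))) X = k1 (aa I N M) (hs (hs (rr I) (e1 N)) (e1 M))"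
  proof -
    have "k1 (hs (e1 I) (hs (ll N) (e1 M))) X = k1 (k1 (hs (e1 I) (hs (ll N) (e1 M))) (aa I (hc I N) M)) (hs (aa I I N) (e1 M))"
      unfolding X_def by (rule cat_assoc[OF cat1, symmetric]) (use ob in simp_all)
    also have "\<dots> = k1 (k1 (aa I N M) (hs (hs (e1 I) (ll N)) (e1 M))) (hs (aa I I N) (e1 M))"
      by (simp only: an2)
    also have "\<dots> = k1 (aa I N M) (k1 (hs (hs (e1 I) (ll N)) (e1 M)) (hs (aa I I N) (e1 M)))"
      by (rule cat_assoc[OF cat1]) (use ob in simp_all)
    also have "k1 (hs (hs (e1 I) (ll N)) (e1 M)) (hs (aa I I N) (e1 M)) = hs (k1 (hs (e1 I) (ll N)) (aa I I N)) (e1 M)"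
      by (rule whisker_right[symmetric]) (use ob in simp_all)
    finally show ?thesis by (simp only: tr2)
  qed
  let ?F = "hs (e1 I) (k1 (ll (hc N M)) (aa I N M))" and ?G = "hs (e1 I) (hs (ll N) (e1 M))"
  have "k1 (k1 ?F (aa I (hc I N) M)) (hs (aa I I N) (e1 M)) = k1 ?F X"
    unfolding X_def by (rule cat_assoc[OF cat1]) (use ob in simp_all)
  also have "\<dots> = k1 ?G X" using L R by simp
  also have "\<dots> = k1 (k1 ?G (aa I (hc I N) M)) (hs (aa I I N) (e1 M))"
    unfolding X_def by (rule cat_assoc[OF cat1, symmetric]) (use ob in simp_all)
  finally have eq: "k1 (k1 ?F (aa I (hc I N) M)) (hs (aa I I N) (e1 M))
      = k1 (k1 ?G (aa I (hc I N) M)) (hs (aa I I N) (e1 M))" .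
  have B: "k1 (hs (aa I I N) (e1 M)) B = e1 (hc (hc I (hc I N)) M)"
    unfolding B_def using whisker_right[of "ai I I N" "aa I I N" M] ob by simp
  have eq1: "k1 ?F (aa I (hc I N) M) = k1 ?G (aa I (hc I N) M)"
    by (rule split_epi_cancel[OF cat1 _ _ _ _ _ _ _ _ eq, where g = B]) (use ob B in \<open>simp_all add: B_def\<close>)
  have "?F = ?G"
    by (rule split_epi_cancel[OF cat1 _ _ _ _ _ _ _ _ eq1, where g = "ai I (hc I N) M"]) (use ob in simp_all)
  then show ?thesis by (simp only: I_def)
qed

lemma lunit_hcomp:
  assumes "M \<in> Ob1" "N \<in> Ob1" "Th M = Sh N"
  shows "k1 (ll (hc N M)) (aa (Uh (Th N)) N M) = hs (ll N) (e1 M)"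
  by (rule unit_hcomp_cancel) (use assms lunit_hcomp_whiskered[OF assms] in simp_all)

lemma runit_hcomp_whiskered:
  assumes M: "M \<in> Ob1" and N: "N \<in> Ob1" and MN: "Th M = Sh N"
  shows "hs (rr (hc N M)) (e1 (Uh (Sh M))) = hs (k1 (hs (e1 N) (rr M)) (aa N M (Uh (Sh M)))) (e1 (Uh (Sh M)))"
proof -
  define J where "J = Uh (Sh M)"
  have J: "J \<in> Ob1" "Sh J = Sh M" "Th J = Sh M" using M by (simp_all add: J_def)
  have UJ: "Uh (Sh M) = J" by (simp add: J_def)
  note ob = M N MN J UJ
  have tr1: "k1 (hs (e1 (hc N M)) (ll J)) (aa (hc N M) J J) = hs (rr (hc N M)) (e1 J)"
    using triangle[of J "hc N M"] ob by simp
  have an1: "k1 (aa N M J) (hs (e1 (hc N M)) (ll J)) = k1 (hs (e1 N) (hs (e1 M) (ll J))) (aa N M (hc J J))"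
    using assoc_natural[of "ll J" "e1 M" "e1 N"] ob by simp
  have p: "k1 (aa N M (hc J J)) (aa (hc N M) J J) = k1 (hs (e1 N) (aa M J J)) (k1 (aa N (hc M J) J) (hs (aa N M J) (e1 J)))"
    by (rule pentagon) (use ob in simp_all)
  have wl: "k1 (hs (e1 N) (hs (e1 M) (ll J))) (hs (e1 N) (aa M J J)) = hs (e1 N) (k1 (hs (e1 M) (ll J)) (aa M J J))"
    by (rule whisker_left[symmetric]) (use ob in simp_all)
  have tr2: "k1 (hs (e1 M) (ll J)) (aa M J J) = hs (rr M) (e1 J)"
    using triangle[of J M] ob by simp
  have an2: "k1 (aa N M J) (hs (hs (e1 N) (rr M)) (e1 J)) = k1 (hs (e1 N) (hs (rr M) (e1 J))) (aa N (hc M J) J)"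
    using assoc_natural[of "e1 J" "rr M" "e1 N"] ob by simp
  have wr: "hs (k1 (hs (e1 N) (rr M)) (aa N M J)) (e1 J) = k1 (hs (hs (e1 N) (rr M)) (e1 J)) (hs (aa N M J) (e1 J))"
    by (rule whisker_right) (use ob in simp_all)
  have L: "k1 (aa N M J) (hs (rr (hc N M)) (e1 J)) = k1 (aa N M J) (k1 (hs (hs (e1 N) (rr M)) (e1 J)) (hs (aa N M J) (e1 J)))"
  proof -
    have "k1 (aa N M J) (hs (rr (hc N M)) (e1 J)) = k1 (aa N M J) (k1 (hs (e1 (hc N M)) (ll J)) (aa (hc N M) J J))"
      by (simp only: tr1)
    also have "\<dots> = k1 (k1 (aa N M J) (hs (e1 (hc N M)) (ll J))) (aa (hc N M) J J)"
      by (rule cat_assoc[OF cat1, symmetric]) (use ob in simp_all)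
    also have "\<dots> = k1 (hs (e1 N) (hs (e1 M) (ll J))) (k1 (aa N M (hc J J)) (aa (hc N M) J J))"
      unfolding an1 by (rule cat_assoc[OF cat1]) (use ob in simp_all)
    also have "\<dots> = k1 (hs (e1 N) (hs (e1 M) (ll J))) (k1 (hs (e1 N) (aa M J J)) (k1 (aa N (hc M J) J) (hs (aa N M J) (e1 J))))"
      by (simp only: p)
    also have "\<dots> = k1 (k1 (hs (e1 N) (hs (e1 M) (ll J))) (hs (e1 N) (aa M J J))) (k1 (aa N (hc M J) J) (hs (aa N M J) (e1 J)))"
      by (rule cat_assoc[OF cat1, symmetric]) (use ob in simp_all)
    also have "\<dots> = k1 (hs (e1 N) (hs (rr M) (e1 J))) (k1 (aa N (hc M J) J) (hs (aa N M J) (e1 J)))"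
      by (simp only: wl tr2)
    also have "\<dots> = k1 (k1 (hs (e1 N) (hs (rr M) (e1 J))) (aa N (hc M J) J)) (hs (aa N M J) (e1 J))"
      by (rule cat_assoc[OF cat1, symmetric]) (use ob in simp_all)
    also have "\<dots> = k1 (k1 (aa N M J) (hs (hs (e1 N) (rr M)) (e1 J))) (hs (aa N M J) (e1 J))"
      by (simp only: an2)
    also have "\<dots> = k1 (aa N M J) (k1 (hs (hs (e1 N) (rr M)) (e1 J)) (hs (aa N M J) (e1 J)))"
      by (rule cat_assoc[OF cat1]) (use ob in simp_all)
    finally show ?thesis .
  qed
  have "hs (rr (hc N M)) (e1 J) = hs (k1 (hs (e1 N) (rr M)) (aa N M J)) (e1 J)"
    by (rule split_mono_cancel[OF cat1, of "aa N M J" "ai N M J"]) (use ob L wr in simp_all)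
  then show ?thesis by (simp only: J_def)
qed

lemma runit_hcomp:
  assumes "M \<in> Ob1" "N \<in> Ob1" "Th M = Sh N"
  shows "rr (hc N M) = k1 (hs (e1 N) (rr M)) (aa N M (Uh (Sh M)))"
  by (rule hcomp_unit_cancel) (use assms runit_hcomp_whiskered[OF assms] in simp_all)

section \<open>Restriction along companions and conjoints\<close>

abbreviation "D00 \<equiv> product_cat D0 D0"
abbreviation "vbound \<alpha> \<equiv> (Sv \<alpha>, Tv \<alpha>)"

lemma category_D00: "category D00"
  by (rule category_product_cat[OF cat0 cat0])

lemma boundary_functor: "functor D1 D00 (\<lambda>M. (Sh M, Th M)) (\<lambda>\<alpha>. vbound \<alpha>)"
  by (rule functor_pair[OF funS funT])

definition companion :: "'v \<Rightarrow> 'h \<Rightarrow> 's \<Rightarrow> 's \<Rightarrow> bool" where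
  "companion f fh p1 p2 \<longleftrightarrow> f \<in> Ar0 \<and> fh \<in> Ob1 \<and> Sh fh = d0 f \<and> Th fh = c0 f
    \<and> p1 \<in> Ar1 \<and> d1 p1 = fh \<and> c1 p1 = Uh (c0 f) \<and> Sv p1 = f \<and> Tv p1 = e0 (c0 f)
    \<and> p2 \<in> Ar1 \<and> d1 p2 = Uh (d0 f) \<and> c1 p2 = fh \<and> Sv p2 = e0 (d0 f) \<and> Tv p2 = f
    \<and> k1 p1 p2 = Us f \<and> k1 (ll fh) (hs p1 p2) = rr fh"

definition conjoint :: "'v \<Rightarrow> 'h \<Rightarrow> 's \<Rightarrow> 's \<Rightarrow> bool" where
  "conjoint f fc q1 q2 \<longleftrightarrow> f \<in> Ar0 \<and> fc \<in> Ob1 \<and> Sh fc = c0 f \<and> Th fc = d0 f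
    \<and> q1 \<in> Ar1 \<and> d1 q1 = fc \<and> c1 q1 = Uh (c0 f) \<and> Sv q1 = e0 (c0 f) \<and> Tv q1 = f
    \<and> q2 \<in> Ar1 \<and> d1 q2 = Uh (d0 f) \<and> c1 q2 = fc \<and> Sv q2 = f \<and> Tv q2 = e0 (d0 f)
    \<and> k1 q1 q2 = Us f \<and> k1 (rr fc) (hs q2 q1) = ll fc"

lemma has_companionE:
  assumes "has_companion D f" "f \<in> Ar0"
  obtains fh p1 p2 where "companion f fh p1 p2"
  using assms unfolding has_companion_def companion_def Let_def by blast

lemma has_conjointE:
  assumes "has_conjoint D f" "f \<in> Ar0"
  obtains fc q1 q2 where "conjoint f fc q1 q2"
  using assms unfolding has_conjoint_def conjoint_def Let_def by blast

context
  fixes f fh p1 p2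
  assumes companion: "companion f fh p1 p2"
begin

lemma companion_data:
  "f \<in> Ar0" "fh \<in> Ob1" "Sh fh = d0 f" "Th fh = c0 f"
  "p1 \<in> Ar1" "d1 p1 = fh" "c1 p1 = Uh (c0 f)" "Sv p1 = f" "Tv p1 = e0 (c0 f)"
  "p2 \<in> Ar1" "d1 p2 = Uh (d0 f)" "c1 p2 = fh" "Sv p2 = e0 (d0 f)" "Tv p2 = f"
  and companion_vcomp: "k1 p1 p2 = Us f"
  and companion_hcomp: "k1 (ll fh) (hs p1 p2) = rr fh"
  using companion unfolding companion_def by simp_all

lemma companion_source_factor:
  assumes M: "M \<in> Ob1" "Sh M = c0 f" and psi: "\<psi> \<in> Ar1" "c1 \<psi> = M"
    and u: "u \<in> Ar0" "c0 u = d0 f" "d0 u = Sh (d1 \<psi>)" and sv: "Sv \<psi> = k0 f u"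
  shows "k1 (k1 (rr M) (hs (e1 M) p1)) (k1 (hs \<psi> (k1 p2 (Us u))) (ri (d1 \<psi>))) = \<psi>"
proof -
  note ob = companion_data M psi u sv
  have i: "k1 (hs (e1 M) p1) (hs \<psi> (k1 p2 (Us u))) = hs \<psi> (Us (k0 f u))"
  proof -
    have "k1 (hs (e1 M) p1) (hs \<psi> (k1 p2 (Us u))) = hs (k1 (e1 M) \<psi>) (k1 p1 (k1 p2 (Us u)))"
      by (rule interchange[symmetric]) (use ob in simp_all)
    also have "\<dots> = hs \<psi> (k1 (k1 p1 p2) (Us u))" using ob by simp
    also have "\<dots> = hs \<psi> (Us (k0 f u))" using ob companion_vcomp by simp
    finally show ?thesis .
  qed
  have r: "k1 (rr M) (hs \<psi> (Us (Sv \<psi>))) = k1 \<psi> (rr (d1 \<psi>))" using runit_natural[OF psi(1)] psi by simp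
  have "k1 (k1 (rr M) (hs (e1 M) p1)) (k1 (hs \<psi> (k1 p2 (Us u))) (ri (d1 \<psi>)))
      = k1 (rr M) (k1 (hs (e1 M) p1) (k1 (hs \<psi> (k1 p2 (Us u))) (ri (d1 \<psi>))))"
    by (rule cat_assoc[OF cat1]) (use ob in simp_all)
  also have "\<dots> = k1 (rr M) (k1 (hs \<psi> (Us (k0 f u))) (ri (d1 \<psi>)))"
    by (subst cat_comp_assoc_eq[OF cat1 i]) (use ob in simp_all)
  also have "\<dots> = k1 (k1 \<psi> (rr (d1 \<psi>))) (ri (d1 \<psi>))"
    by (subst cat_comp_assoc_eq[OF cat1 r[unfolded sv]]) (use ob in simp_all)
  also have "\<dots> = \<psi>" using ob by simp
  finally show ?thesis .
qed

lemma companion_source_zigzag: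
  assumes M: "M \<in> Ob1" "Sh M = c0 f"
  shows "hs (k1 (rr M) (hs (e1 M) p1)) p2 = rr (hc M fh)"
proof -
  note ob = companion_data M
  have "hs (k1 (rr M) (hs (e1 M) p1)) p2 = hs (k1 (rr M) (hs (e1 M) p1)) (k1 (e1 fh) p2)" using ob by simp
  also have "\<dots> = k1 (hs (rr M) (e1 fh)) (hs (hs (e1 M) p1) p2)"
    by (rule interchange) (use ob in simp_all)
  also have "hs (rr M) (e1 fh) = k1 (hs (e1 M) (ll fh)) (aa M (Uh (c0 f)) fh)"
    using triangle[of fh M] ob by simp
  also have "k1 (k1 (hs (e1 M) (ll fh)) (aa M (Uh (c0 f)) fh)) (hs (hs (e1 M) p1) p2)
     = k1 (hs (e1 M) (ll fh)) (k1 (aa M (Uh (c0 f)) fh) (hs (hs (e1 M) p1) p2))"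
    by (rule cat_assoc[OF cat1]) (use ob in simp_all)
  also have "k1 (aa M (Uh (c0 f)) fh) (hs (hs (e1 M) p1) p2) = k1 (hs (e1 M) (hs p1 p2)) (aa M fh (Uh (d0 f)))"
    using assoc_natural[of p2 p1 "e1 M"] ob by simp
  also have "k1 (hs (e1 M) (ll fh)) (k1 (hs (e1 M) (hs p1 p2)) (aa M fh (Uh (d0 f))))
      = k1 (k1 (hs (e1 M) (ll fh)) (hs (e1 M) (hs p1 p2))) (aa M fh (Uh (d0 f)))"
    by (rule cat_assoc[OF cat1, symmetric]) (use ob in simp_all)
  also have "k1 (hs (e1 M) (ll fh)) (hs (e1 M) (hs p1 p2)) = hs (e1 M) (k1 (ll fh) (hs p1 p2))"
    by (rule whisker_left[symmetric]) (use ob in simp_all)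
  also have "\<dots> = hs (e1 M) (rr fh)" by (simp only: companion_hcomp)
  also have "k1 (hs (e1 M) (rr fh)) (aa M fh (Uh (d0 f))) = rr (hc M fh)"
    using runit_hcomp[of fh M] ob by simp
  finally show ?thesis .
qed

lemma companion_source_recover:
  assumes M: "M \<in> Ob1" "Sh M = c0 f" and chi: "\<chi> \<in> Ar1" "c1 \<chi> = hc M fh"
  shows "k1 (hs (k1 (k1 (rr M) (hs (e1 M) p1)) \<chi>) (k1 p2 (Us (Sv \<chi>)))) (ri (d1 \<chi>)) = \<chi>"
proof -
  note ob = companion_data M chi
  have "hs (k1 (k1 (rr M) (hs (e1 M) p1)) \<chi>) (k1 p2 (Us (Sv \<chi>)))
      = k1 (hs (k1 (rr M) (hs (e1 M) p1)) p2) (hs \<chi> (Us (Sv \<chi>)))"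
    by (rule interchange) (use ob in simp_all)
  also have "\<dots> = k1 (rr (hc M fh)) (hs \<chi> (Us (Sv \<chi>)))" using companion_source_zigzag[OF M] by simp
  also have "\<dots> = k1 \<chi> (rr (d1 \<chi>))" using runit_natural[OF chi(1)] chi by simp
  finally have e: "hs (k1 (k1 (rr M) (hs (e1 M) p1)) \<chi>) (k1 p2 (Us (Sv \<chi>))) = k1 \<chi> (rr (d1 \<chi>))" .
  show ?thesis unfolding e using ob by simp
qed

lemma companion_target_factor:
  assumes N: "N \<in> Ob1" "Th N = d0 f" and psi: "\<psi> \<in> Ar1" "d1 \<psi> = N"
    and v: "v \<in> Ar0" "d0 v = c0 f" "c0 v = Th (c1 \<psi>)" and tv: "Tv \<psi> = k0 v f"
  shows "k1 (k1 (ll (c1 \<psi>)) (hs (k1 (Us v) p1) \<psi>)) (k1 (hs p2 (e1 N)) (li N)) = \<psi>"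
proof -
  note ob = companion_data N psi v tv
  have i: "k1 (hs (k1 (Us v) p1) \<psi>) (hs p2 (e1 N)) = hs (Us (k0 v f)) \<psi>"
  proof -
    have "k1 (hs (k1 (Us v) p1) \<psi>) (hs p2 (e1 N)) = hs (k1 (k1 (Us v) p1) p2) (k1 \<psi> (e1 N))"
      by (rule interchange[symmetric]) (use ob in simp_all)
    also have "\<dots> = hs (k1 (Us v) (k1 p1 p2)) \<psi>" using ob by simp
    also have "\<dots> = hs (Us (k0 v f)) \<psi>" using ob companion_vcomp by simp
    finally show ?thesis .
  qed
  have l: "k1 (ll (c1 \<psi>)) (hs (Us (Tv \<psi>)) \<psi>) = k1 \<psi> (ll (d1 \<psi>))" using lunit_natural[OF psi(1)] by simp
  have "k1 (k1 (ll (c1 \<psi>)) (hs (k1 (Us v) p1) \<psi>)) (k1 (hs p2 (e1 N)) (li N))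
      = k1 (ll (c1 \<psi>)) (k1 (hs (k1 (Us v) p1) \<psi>) (k1 (hs p2 (e1 N)) (li N)))"
    by (rule cat_assoc[OF cat1]) (use ob in simp_all)
  also have "\<dots> = k1 (ll (c1 \<psi>)) (k1 (hs (Us (k0 v f)) \<psi>) (li N))"
    by (subst cat_comp_assoc_eq[OF cat1 i]) (use ob in simp_all)
  also have "\<dots> = k1 (k1 \<psi> (ll (d1 \<psi>))) (li N)"
    by (subst cat_comp_assoc_eq[OF cat1 l[unfolded tv]]) (use ob in simp_all)
  also have "\<dots> = \<psi>" using ob by simp
  finally show ?thesis .
qed

lemma companion_target_zigzag:
  assumes N: "N \<in> Ob1" "Th N = d0 f"
  shows "k1 (ll (hc fh N)) (hs p1 (k1 (hs p2 (e1 N)) (li N))) = e1 (hc fh N)"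
proof -
  note ob = companion_data N
  have "hs p1 (k1 (hs p2 (e1 N)) (li N)) = hs (k1 p1 (e1 fh)) (k1 (hs p2 (e1 N)) (li N))" using ob by simp
  also have "\<dots> = k1 (hs p1 (hs p2 (e1 N))) (hs (e1 fh) (li N))"
    by (rule interchange) (use ob in simp_all)
  finally have e1: "hs p1 (k1 (hs p2 (e1 N)) (li N)) = k1 (hs p1 (hs p2 (e1 N))) (hs (e1 fh) (li N))" .
  have an: "k1 (aa (Uh (c0 f)) fh N) (hs (hs p1 p2) (e1 N)) = k1 (hs p1 (hs p2 (e1 N))) (aa fh (Uh (d0 f)) N)"
    using assoc_natural[of "e1 N" p2 p1] ob by simp
  have lu: "k1 (ll (hc fh N)) (aa (Uh (c0 f)) fh N) = hs (ll fh) (e1 N)"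
    using lunit_hcomp[of N fh] ob by simp
  have tr: "k1 (hs (e1 fh) (ll N)) (aa fh (Uh (d0 f)) N) = hs (rr fh) (e1 N)"
    using triangle[of N fh] ob by simp
  have wr: "k1 (hs (ll fh) (e1 N)) (hs (hs p1 p2) (e1 N)) = hs (rr fh) (e1 N)"
    using whisker_right[of "hs p1 p2" "ll fh" N] ob companion_hcomp by simp
  have wl: "k1 (hs (e1 fh) (ll N)) (hs (e1 fh) (li N)) = e1 (hc fh N)"
    using whisker_left[of "li N" "ll N" fh] ob by simp
  have "k1 (ll (hc fh N)) (k1 (hs p1 (hs p2 (e1 N))) (hs (e1 fh) (li N)))
     = k1 (ll (hc fh N)) (k1 (k1 (hs p1 (hs p2 (e1 N))) (k1 (aa fh (Uh (d0 f)) N) (ai fh (Uh (d0 f)) N))) (hs (e1 fh) (li N)))"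
    using ob by simp
  also have "\<dots> = k1 (ll (hc fh N)) (k1 (k1 (k1 (aa (Uh (c0 f)) fh N) (hs (hs p1 p2) (e1 N))) (ai fh (Uh (d0 f)) N)) (hs (e1 fh) (li N)))"
    by (subst cat_assoc[OF cat1, symmetric, of "ai fh (Uh (d0 f)) N"]) (use ob an in simp_all)
  also have "\<dots> = k1 (k1 (ll (hc fh N)) (aa (Uh (c0 f)) fh N)) (k1 (hs (hs p1 p2) (e1 N)) (k1 (ai fh (Uh (d0 f)) N) (hs (e1 fh) (li N))))"
    using ob by simp
  also have "\<dots> = k1 (hs (rr fh) (e1 N)) (k1 (ai fh (Uh (d0 f)) N) (hs (e1 fh) (li N)))"
    by (simp only: lu, subst cat_comp_assoc_eq[OF cat1 wr]) (use ob in simp_all)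
  also have "\<dots> = k1 (k1 (k1 (hs (e1 fh) (ll N)) (aa fh (Uh (d0 f)) N)) (ai fh (Uh (d0 f)) N)) (hs (e1 fh) (li N))"
    unfolding tr[symmetric] by (rule cat_assoc[OF cat1, symmetric]) (use ob in simp_all)
  also have "\<dots> = k1 (hs (e1 fh) (ll N)) (hs (e1 fh) (li N))" using ob by simp
  also have "\<dots> = e1 (hc fh N)" by (rule wl)
  finally show ?thesis unfolding e1 .
qed

lemma companion_target_recover:
  assumes N: "N \<in> Ob1" "Th N = d0 f" and chi: "\<chi> \<in> Ar1" "d1 \<chi> = hc fh N"
  shows "k1 (ll (c1 \<chi>)) (hs (k1 (Us (Tv \<chi>)) p1) (k1 \<chi> (k1 (hs p2 (e1 N)) (li N)))) = \<chi>"
proof -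
  note ob = companion_data N chi
  have "hs (k1 (Us (Tv \<chi>)) p1) (k1 \<chi> (k1 (hs p2 (e1 N)) (li N)))
      = k1 (hs (Us (Tv \<chi>)) \<chi>) (hs p1 (k1 (hs p2 (e1 N)) (li N)))"
    by (rule interchange) (use ob in simp_all)
  hence "k1 (ll (c1 \<chi>)) (hs (k1 (Us (Tv \<chi>)) p1) (k1 \<chi> (k1 (hs p2 (e1 N)) (li N))))
     = k1 (k1 (ll (c1 \<chi>)) (hs (Us (Tv \<chi>)) \<chi>)) (hs p1 (k1 (hs p2 (e1 N)) (li N)))"
    by (simp only:) (rule cat_assoc[OF cat1, symmetric], use ob in simp_all)
  also have "\<dots> = k1 (k1 \<chi> (ll (hc fh N))) (hs p1 (k1 (hs p2 (e1 N)) (li N)))"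
    using lunit_natural[OF chi(1)] chi by simp
  also have "\<dots> = k1 \<chi> (k1 (ll (hc fh N)) (hs p1 (k1 (hs p2 (e1 N)) (li N))))"
    by (rule cat_assoc[OF cat1]) (use ob in simp_all)
  also have "\<dots> = \<chi>" unfolding companion_target_zigzag[OF N] using ob by simp
  finally show ?thesis .
qed

lemma companion_source_cartesian:
  assumes M: "M \<in> Ob1" "Sh M = c0 f"
  shows "cartesian D1 D00 (\<lambda>\<alpha>. vbound \<alpha>) (k1 (rr M) (hs (e1 M) p1))" (is "cartesian _ _ _ ?\<phi>")
proof -
  note ob = companion_data M
  have \<phi>: "?\<phi> \<in> Ar1" "d1 ?\<phi> = hc M fh" "c1 ?\<phi> = M" "Sv ?\<phi> = f" "Tv ?\<phi> = e0 (Th M)"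
    using ob by simp_all
  show ?thesis
  proof (rule cartesianI)
    fix \<psi> g
    assume \<psi>: "\<psi> \<in> Ar1" "c1 \<psi> = c1 ?\<phi>" and g: "g \<in> cAr D00" "ccod D00 g = cdom D00 (vbound ?\<phi>)"
      "vbound \<psi> = ccomp D00 (vbound ?\<phi>) g"
    obtain u v where uv: "g = (u, v)" by (cases g)
    have "u \<in> Ar0" "v \<in> Ar0" "c0 u = d0 f" "c0 v = Th M" "Sv \<psi> = k0 f u" "Tv \<psi> = k0 (e0 (Th M)) v"
      using g \<phi> M unfolding uv by simp_all
    moreover have "d0 (Sv \<psi>) = Sh (d1 \<psi>)" "d0 (Tv \<psi>) = Th (d1 \<psi>)" using \<psi> by simp_all
    ultimately have u: "u \<in> Ar0" "v \<in> Ar0" "c0 u = d0 f" "Sv \<psi> = k0 f u" "Tv \<psi> = v"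
      "d0 u = Sh (d1 \<psi>)" "d0 v = Th (d1 \<psi>)"
      using ob by simp_all
    let ?\<chi> = "k1 (hs \<psi> (k1 p2 (Us u))) (ri (d1 \<psi>))"
    have "k1 ?\<phi> ?\<chi> = \<psi>" by (rule companion_source_factor) (use ob \<psi> \<phi> u in simp_all)
    then show "\<exists>\<chi>. \<chi> \<in> Ar1 \<and> d1 \<chi> = d1 \<psi> \<and> c1 \<chi> = d1 ?\<phi> \<and> vbound \<chi> = g \<and> k1 ?\<phi> \<chi> = \<psi>"
      using ob \<psi> \<phi> u unfolding uv by (intro exI[of _ ?\<chi>]) simp
  next
    fix \<chi> \<chi>'
    assume \<chi>: "\<chi> \<in> Ar1" "\<chi>' \<in> Ar1" "c1 \<chi> = d1 ?\<phi>" "c1 \<chi>' = d1 ?\<phi>" "d1 \<chi> = d1 \<chi>'"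
      "vbound \<chi> = vbound \<chi>'" "k1 ?\<phi> \<chi> = k1 ?\<phi> \<chi>'"
    have "\<chi> = k1 (hs (k1 ?\<phi> \<chi>) (k1 p2 (Us (Sv \<chi>)))) (ri (d1 \<chi>))"
      by (rule companion_source_recover[symmetric]) (use M \<chi> \<phi> in simp_all)
    also have "\<dots> = k1 (hs (k1 ?\<phi> \<chi>') (k1 p2 (Us (Sv \<chi>')))) (ri (d1 \<chi>'))" using \<chi> by simp
    also have "\<dots> = \<chi>'" by (rule companion_source_recover) (use M \<chi> \<phi> in simp_all)
    finally show "\<chi> = \<chi>'" .
  qed (fact \<phi>(1))
qed

lemma companion_target_opcartesian:
  assumes N: "N \<in> Ob1" "Th N = d0 f"
  shows "opcartesian D1 D00 (\<lambda>\<alpha>. vbound \<alpha>) (k1 (hs p2 (e1 N)) (li N))" (is "opcartesian _ _ _ ?\<epsilon>")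
proof -
  note ob = companion_data N
  have \<epsilon>: "?\<epsilon> \<in> Ar1" "d1 ?\<epsilon> = N" "c1 ?\<epsilon> = hc fh N" "Sv ?\<epsilon> = e0 (Sh N)" "Tv ?\<epsilon> = f"
    using ob by simp_all
  show ?thesis
  proof (rule opcartesianI)
    fix \<psi> h
    assume \<psi>: "\<psi> \<in> Ar1" "d1 \<psi> = d1 ?\<epsilon>" and h: "h \<in> cAr D00" "cdom D00 h = ccod D00 (vbound ?\<epsilon>)"
      "vbound \<psi> = ccomp D00 h (vbound ?\<epsilon>)"
    obtain u v where uv: "h = (u, v)" by (cases h)
    have "u \<in> Ar0" "v \<in> Ar0" "d0 u = Sh N" "d0 v = c0 f" "Sv \<psi> = k0 u (e0 (Sh N))" "Tv \<psi> = k0 v f"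
      using h \<epsilon> N unfolding uv by simp_all
    moreover have "c0 (Sv \<psi>) = Sh (c1 \<psi>)" "c0 (Tv \<psi>) = Th (c1 \<psi>)" using \<psi> by simp_all
    ultimately have v: "u \<in> Ar0" "v \<in> Ar0" "d0 v = c0 f" "Sv \<psi> = u" "Tv \<psi> = k0 v f"
      "c0 u = Sh (c1 \<psi>)" "c0 v = Th (c1 \<psi>)"
      using ob by simp_all
    let ?\<chi> = "k1 (ll (c1 \<psi>)) (hs (k1 (Us v) p1) \<psi>)"
    have "k1 ?\<chi> ?\<epsilon> = \<psi>" by (rule companion_target_factor) (use ob \<psi> \<epsilon> v in simp_all)
    then show "\<exists>\<chi>. \<chi> \<in> Ar1 \<and> d1 \<chi> = c1 ?\<epsilon> \<and> c1 \<chi> = c1 \<psi> \<and> vbound \<chi> = h \<and> k1 \<chi> ?\<epsilon> = \<psi>"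
      using ob \<psi> \<epsilon> v unfolding uv by (intro exI[of _ ?\<chi>]) simp
  next
    fix \<chi> \<chi>'
    assume \<chi>: "\<chi> \<in> Ar1" "\<chi>' \<in> Ar1" "d1 \<chi> = c1 ?\<epsilon>" "d1 \<chi>' = c1 ?\<epsilon>" "c1 \<chi> = c1 \<chi>'"
      "vbound \<chi> = vbound \<chi>'" "k1 \<chi> ?\<epsilon> = k1 \<chi>' ?\<epsilon>"
    have "\<chi> = k1 (ll (c1 \<chi>)) (hs (k1 (Us (Tv \<chi>)) p1) (k1 \<chi> ?\<epsilon>))"
      by (rule companion_target_recover[symmetric]) (use N \<chi> \<epsilon> in simp_all)
    also have "\<dots> = k1 (ll (c1 \<chi>')) (hs (k1 (Us (Tv \<chi>')) p1) (k1 \<chi>' ?\<epsilon>))" using \<chi> by simp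
    also have "\<dots> = \<chi>'" by (rule companion_target_recover) (use N \<chi> \<epsilon> in simp_all)
    finally show "\<chi> = \<chi>'" .
  qed (fact \<epsilon>(1))
qed

end

context
  fixes f fc q1 q2
  assumes conjoint: "conjoint f fc q1 q2"
begin

lemma conjoint_data:
  "f \<in> Ar0" "fc \<in> Ob1" "Sh fc = c0 f" "Th fc = d0 f"
  "q1 \<in> Ar1" "d1 q1 = fc" "c1 q1 = Uh (c0 f)" "Sv q1 = e0 (c0 f)" "Tv q1 = f"
  "q2 \<in> Ar1" "d1 q2 = Uh (d0 f)" "c1 q2 = fc" "Sv q2 = f" "Tv q2 = e0 (d0 f)"
  and conjoint_vcomp: "k1 q1 q2 = Us f"
  and conjoint_hcomp: "k1 (rr fc) (hs q2 q1) = ll fc"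
  using conjoint unfolding conjoint_def by simp_all

lemma conjoint_target_factor:
  assumes M: "M \<in> Ob1" "Th M = c0 f" and psi: "\<psi> \<in> Ar1" "c1 \<psi> = M"
    and v: "v \<in> Ar0" "c0 v = d0 f" "d0 v = Th (d1 \<psi>)" and tv: "Tv \<psi> = k0 f v"
  shows "k1 (k1 (ll M) (hs q1 (e1 M))) (k1 (hs (k1 q2 (Us v)) \<psi>) (li (d1 \<psi>))) = \<psi>"
proof -
  note ob = conjoint_data M psi v tv
  have i: "k1 (hs q1 (e1 M)) (hs (k1 q2 (Us v)) \<psi>) = hs (Us (k0 f v)) \<psi>"
  proof -
    have "k1 (hs q1 (e1 M)) (hs (k1 q2 (Us v)) \<psi>) = hs (k1 q1 (k1 q2 (Us v))) (k1 (e1 M) \<psi>)"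
      by (rule interchange[symmetric]) (use ob in simp_all)
    also have "\<dots> = hs (k1 (k1 q1 q2) (Us v)) \<psi>" using ob by simp
    also have "\<dots> = hs (Us (k0 f v)) \<psi>" using ob conjoint_vcomp by simp
    finally show ?thesis .
  qed
  have l: "k1 (ll M) (hs (Us (Tv \<psi>)) \<psi>) = k1 \<psi> (ll (d1 \<psi>))" using lunit_natural[OF psi(1)] psi by simp
  have "k1 (k1 (ll M) (hs q1 (e1 M))) (k1 (hs (k1 q2 (Us v)) \<psi>) (li (d1 \<psi>)))
      = k1 (ll M) (k1 (hs q1 (e1 M)) (k1 (hs (k1 q2 (Us v)) \<psi>) (li (d1 \<psi>))))"
    by (rule cat_assoc[OF cat1]) (use ob in simp_all)
  also have "\<dots> = k1 (ll M) (k1 (hs (Us (k0 f v)) \<psi>) (li (d1 \<psi>)))"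
    by (subst cat_comp_assoc_eq[OF cat1 i]) (use ob in simp_all)
  also have "\<dots> = k1 (k1 \<psi> (ll (d1 \<psi>))) (li (d1 \<psi>))"
    by (subst cat_comp_assoc_eq[OF cat1 l[unfolded tv]]) (use ob in simp_all)
  also have "\<dots> = \<psi>" using ob by simp
  finally show ?thesis .
qed

lemma conjoint_target_zigzag:
  assumes M: "M \<in> Ob1" "Th M = c0 f"
  shows "hs q2 (k1 (ll M) (hs q1 (e1 M))) = ll (hc fc M)"
proof -
  note ob = conjoint_data M
  let ?Ud = "Uh (d0 f)" and ?Uc = "Uh (c0 f)"
  have "hs q2 (k1 (ll M) (hs q1 (e1 M))) = hs (k1 (e1 fc) q2) (k1 (ll M) (hs q1 (e1 M)))" using ob by simp
  also have "\<dots> = k1 (hs (e1 fc) (ll M)) (hs q2 (hs q1 (e1 M)))"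
    by (rule interchange) (use ob in simp_all)
  finally have e: "hs q2 (k1 (ll M) (hs q1 (e1 M))) = k1 (hs (e1 fc) (ll M)) (hs q2 (hs q1 (e1 M)))" .
  have an: "k1 (aa fc ?Uc M) (hs (hs q2 q1) (e1 M)) = k1 (hs q2 (hs q1 (e1 M))) (aa ?Ud fc M)"
    using assoc_natural[of "e1 M" q1 q2] ob by simp
  have tr: "k1 (hs (e1 fc) (ll M)) (aa fc ?Uc M) = hs (rr fc) (e1 M)"
    using triangle[of M fc] ob by simp
  have wr: "k1 (hs (rr fc) (e1 M)) (hs (hs q2 q1) (e1 M)) = hs (ll fc) (e1 M)"
    using whisker_right[of "hs q2 q1" "rr fc" M] ob conjoint_hcomp by simp
  have lu: "k1 (ll (hc fc M)) (aa ?Ud fc M) = hs (ll fc) (e1 M)"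
    using lunit_hcomp[of M fc] ob by simp
  have X: "hs q2 (hs q1 (e1 M)) = k1 (k1 (aa fc ?Uc M) (hs (hs q2 q1) (e1 M))) (ai ?Ud fc M)"
    unfolding an using ob by simp
  have "k1 (hs (e1 fc) (ll M)) (hs q2 (hs q1 (e1 M)))
     = k1 (k1 (hs (e1 fc) (ll M)) (aa fc ?Uc M)) (k1 (hs (hs q2 q1) (e1 M)) (ai ?Ud fc M))"
    unfolding X using ob by simp
  also have "\<dots> = k1 (k1 (hs (rr fc) (e1 M)) (hs (hs q2 q1) (e1 M))) (ai ?Ud fc M)"
    unfolding tr by (rule cat_assoc[OF cat1, symmetric]) (use ob in simp_all)
  also have "\<dots> = k1 (k1 (ll (hc fc M)) (aa ?Ud fc M)) (ai ?Ud fc M)"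
    unfolding wr lu ..
  also have "\<dots> = ll (hc fc M)" using ob by simp
  finally show ?thesis unfolding e .
qed

lemma conjoint_target_recover:
  assumes M: "M \<in> Ob1" "Th M = c0 f" and chi: "\<chi> \<in> Ar1" "c1 \<chi> = hc fc M"
  shows "k1 (hs (k1 q2 (Us (Tv \<chi>))) (k1 (k1 (ll M) (hs q1 (e1 M))) \<chi>)) (li (d1 \<chi>)) = \<chi>"
proof -
  note ob = conjoint_data M chi
  have "hs (k1 q2 (Us (Tv \<chi>))) (k1 (k1 (ll M) (hs q1 (e1 M))) \<chi>)
      = k1 (hs q2 (k1 (ll M) (hs q1 (e1 M)))) (hs (Us (Tv \<chi>)) \<chi>)"
    by (rule interchange) (use ob in simp_all)
  also have "\<dots> = k1 (ll (hc fc M)) (hs (Us (Tv \<chi>)) \<chi>)" using conjoint_target_zigzag[OF M] by simp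
  also have "\<dots> = k1 \<chi> (ll (d1 \<chi>))" using lunit_natural[OF chi(1)] chi by simp
  finally have e: "hs (k1 q2 (Us (Tv \<chi>))) (k1 (k1 (ll M) (hs q1 (e1 M))) \<chi>) = k1 \<chi> (ll (d1 \<chi>))" .
  show ?thesis unfolding e using ob by simp
qed

lemma conjoint_source_factor:
  assumes N: "N \<in> Ob1" "Sh N = d0 f" and psi: "\<psi> \<in> Ar1" "d1 \<psi> = N"
    and u: "u \<in> Ar0" "d0 u = c0 f" "c0 u = Sh (c1 \<psi>)" and sv: "Sv \<psi> = k0 u f"
  shows "k1 (k1 (rr (c1 \<psi>)) (hs \<psi> (k1 (Us u) q1))) (k1 (hs (e1 N) q2) (ri N)) = \<psi>"
proof -
  note ob = conjoint_data N psi u sv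
  have i: "k1 (hs \<psi> (k1 (Us u) q1)) (hs (e1 N) q2) = hs \<psi> (Us (k0 u f))"
  proof -
    have "k1 (hs \<psi> (k1 (Us u) q1)) (hs (e1 N) q2) = hs (k1 \<psi> (e1 N)) (k1 (k1 (Us u) q1) q2)"
      by (rule interchange[symmetric]) (use ob in simp_all)
    also have "\<dots> = hs \<psi> (k1 (Us u) (k1 q1 q2))" using ob by simp
    also have "\<dots> = hs \<psi> (Us (k0 u f))" using ob conjoint_vcomp by simp
    finally show ?thesis .
  qed
  have r: "k1 (rr (c1 \<psi>)) (hs \<psi> (Us (Sv \<psi>))) = k1 \<psi> (rr (d1 \<psi>))" using runit_natural[OF psi(1)] by simp
  have "k1 (k1 (rr (c1 \<psi>)) (hs \<psi> (k1 (Us u) q1))) (k1 (hs (e1 N) q2) (ri N))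
      = k1 (rr (c1 \<psi>)) (k1 (hs \<psi> (k1 (Us u) q1)) (k1 (hs (e1 N) q2) (ri N)))"
    by (rule cat_assoc[OF cat1]) (use ob in simp_all)
  also have "\<dots> = k1 (rr (c1 \<psi>)) (k1 (hs \<psi> (Us (k0 u f))) (ri N))"
    by (subst cat_comp_assoc_eq[OF cat1 i]) (use ob in simp_all)
  also have "\<dots> = k1 (k1 \<psi> (rr (d1 \<psi>))) (ri N)"
    by (subst cat_comp_assoc_eq[OF cat1 r[unfolded sv]]) (use ob in simp_all)
  also have "\<dots> = \<psi>" using ob by simp
  finally show ?thesis .
qed

lemma conjoint_source_zigzag:
  assumes N: "N \<in> Ob1" "Sh N = d0 f"
  shows "k1 (rr (hc N fc)) (hs (k1 (hs (e1 N) q2) (ri N)) q1) = e1 (hc N fc)"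
proof -
  note ob = conjoint_data N
  let ?Ud = "Uh (d0 f)" and ?Uc = "Uh (c0 f)"
  have "hs (k1 (hs (e1 N) q2) (ri N)) q1 = hs (k1 (hs (e1 N) q2) (ri N)) (k1 q1 (e1 fc))" using ob by simp
  also have "\<dots> = k1 (hs (hs (e1 N) q2) q1) (hs (ri N) (e1 fc))"
    by (rule interchange) (use ob in simp_all)
  finally have e: "hs (k1 (hs (e1 N) q2) (ri N)) q1 = k1 (hs (hs (e1 N) q2) q1) (hs (ri N) (e1 fc))" .
  have an: "k1 (aa N fc ?Uc) (hs (hs (e1 N) q2) q1) = k1 (hs (e1 N) (hs q2 q1)) (aa N ?Ud fc)"
    using assoc_natural[of q1 q2 "e1 N"] ob by simp
  have ru: "rr (hc N fc) = k1 (hs (e1 N) (rr fc)) (aa N fc ?Uc)"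
    using runit_hcomp[of fc N] ob by simp
  have wl: "k1 (hs (e1 N) (rr fc)) (hs (e1 N) (hs q2 q1)) = hs (e1 N) (ll fc)"
    using whisker_left[of "hs q2 q1" "rr fc" N] ob conjoint_hcomp by simp
  have tr: "k1 (hs (e1 N) (ll fc)) (aa N ?Ud fc) = hs (rr N) (e1 fc)"
    using triangle[of fc N] ob by simp
  have wr: "k1 (hs (rr N) (e1 fc)) (hs (ri N) (e1 fc)) = e1 (hc N fc)"
    using whisker_right[of "ri N" "rr N" fc] ob by simp
  have "k1 (rr (hc N fc)) (k1 (hs (hs (e1 N) q2) q1) (hs (ri N) (e1 fc)))
     = k1 (hs (e1 N) (rr fc)) (k1 (k1 (aa N fc ?Uc) (hs (hs (e1 N) q2) q1)) (hs (ri N) (e1 fc)))"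
    unfolding ru using ob by simp
  also have "\<dots> = k1 (k1 (hs (e1 N) (rr fc)) (hs (e1 N) (hs q2 q1))) (k1 (aa N ?Ud fc) (hs (ri N) (e1 fc)))"
    unfolding an using ob by simp
  also have "\<dots> = k1 (k1 (hs (e1 N) (ll fc)) (aa N ?Ud fc)) (hs (ri N) (e1 fc))"
    unfolding wl by (rule cat_assoc[OF cat1, symmetric]) (use ob in simp_all)
  also have "\<dots> = e1 (hc N fc)" unfolding tr wr ..
  finally show ?thesis unfolding e .
qed

lemma conjoint_source_recover:
  assumes N: "N \<in> Ob1" "Sh N = d0 f" and chi: "\<chi> \<in> Ar1" "d1 \<chi> = hc N fc"
  shows "k1 (rr (c1 \<chi>)) (hs (k1 \<chi> (k1 (hs (e1 N) q2) (ri N))) (k1 (Us (Sv \<chi>)) q1)) = \<chi>"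
proof -
  note ob = conjoint_data N chi
  have "hs (k1 \<chi> (k1 (hs (e1 N) q2) (ri N))) (k1 (Us (Sv \<chi>)) q1)
      = k1 (hs \<chi> (Us (Sv \<chi>))) (hs (k1 (hs (e1 N) q2) (ri N)) q1)"
    by (rule interchange) (use ob in simp_all)
  hence "k1 (rr (c1 \<chi>)) (hs (k1 \<chi> (k1 (hs (e1 N) q2) (ri N))) (k1 (Us (Sv \<chi>)) q1))
     = k1 (k1 (rr (c1 \<chi>)) (hs \<chi> (Us (Sv \<chi>)))) (hs (k1 (hs (e1 N) q2) (ri N)) q1)"
    by (simp only:) (rule cat_assoc[OF cat1, symmetric], use ob in simp_all)
  also have "\<dots> = k1 (k1 \<chi> (rr (hc N fc))) (hs (k1 (hs (e1 N) q2) (ri N)) q1)"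
    using runit_natural[OF chi(1)] chi by simp
  also have "\<dots> = k1 \<chi> (k1 (rr (hc N fc)) (hs (k1 (hs (e1 N) q2) (ri N)) q1))"
    by (rule cat_assoc[OF cat1]) (use ob in simp_all)
  also have "\<dots> = \<chi>" unfolding conjoint_source_zigzag[OF N] using ob by simp
  finally show ?thesis .
qed

lemma conjoint_target_cartesian:
  assumes M: "M \<in> Ob1" "Th M = c0 f"
  shows "cartesian D1 D00 (\<lambda>\<alpha>. vbound \<alpha>) (k1 (ll M) (hs q1 (e1 M)))" (is "cartesian _ _ _ ?\<phi>")
proof -
  note ob = conjoint_data M
  have \<phi>: "?\<phi> \<in> Ar1" "d1 ?\<phi> = hc fc M" "c1 ?\<phi> = M" "Sv ?\<phi> = e0 (Sh M)" "Tv ?\<phi> = f"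
    using ob by simp_all
  show ?thesis
  proof (rule cartesianI)
    fix \<psi> g
    assume \<psi>: "\<psi> \<in> Ar1" "c1 \<psi> = c1 ?\<phi>" and g: "g \<in> cAr D00" "ccod D00 g = cdom D00 (vbound ?\<phi>)"
      "vbound \<psi> = ccomp D00 (vbound ?\<phi>) g"
    obtain u v where uv: "g = (u, v)" by (cases g)
    have "u \<in> Ar0" "v \<in> Ar0" "c0 u = Sh M" "c0 v = d0 f" "Sv \<psi> = k0 (e0 (Sh M)) u" "Tv \<psi> = k0 f v"
      using g \<phi> M unfolding uv by simp_all
    moreover have "d0 (Sv \<psi>) = Sh (d1 \<psi>)" "d0 (Tv \<psi>) = Th (d1 \<psi>)" using \<psi> by simp_all
    ultimately have v: "u \<in> Ar0" "v \<in> Ar0" "c0 v = d0 f" "Sv \<psi> = u" "Tv \<psi> = k0 f v"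
      "d0 u = Sh (d1 \<psi>)" "d0 v = Th (d1 \<psi>)"
      using ob by simp_all
    let ?\<chi> = "k1 (hs (k1 q2 (Us v)) \<psi>) (li (d1 \<psi>))"
    have "k1 ?\<phi> ?\<chi> = \<psi>" by (rule conjoint_target_factor) (use ob \<psi> \<phi> v in simp_all)
    then show "\<exists>\<chi>. \<chi> \<in> Ar1 \<and> d1 \<chi> = d1 \<psi> \<and> c1 \<chi> = d1 ?\<phi> \<and> vbound \<chi> = g \<and> k1 ?\<phi> \<chi> = \<psi>"
      using ob \<psi> \<phi> v unfolding uv by (intro exI[of _ ?\<chi>]) simp
  next
    fix \<chi> \<chi>'
    assume \<chi>: "\<chi> \<in> Ar1" "\<chi>' \<in> Ar1" "c1 \<chi> = d1 ?\<phi>" "c1 \<chi>' = d1 ?\<phi>" "d1 \<chi> = d1 \<chi>'"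
      "vbound \<chi> = vbound \<chi>'" "k1 ?\<phi> \<chi> = k1 ?\<phi> \<chi>'"
    have "\<chi> = k1 (hs (k1 q2 (Us (Tv \<chi>))) (k1 ?\<phi> \<chi>)) (li (d1 \<chi>))"
      by (rule conjoint_target_recover[symmetric]) (use M \<chi> \<phi> in simp_all)
    also have "\<dots> = k1 (hs (k1 q2 (Us (Tv \<chi>'))) (k1 ?\<phi> \<chi>')) (li (d1 \<chi>'))" using \<chi> by simp
    also have "\<dots> = \<chi>'" by (rule conjoint_target_recover) (use M \<chi> \<phi> in simp_all)
    finally show "\<chi> = \<chi>'" .
  qed (fact \<phi>(1))
qed

lemma conjoint_source_opcartesian:
  assumes N: "N \<in> Ob1" "Sh N = d0 f"
  shows "opcartesian D1 D00 (\<lambda>\<alpha>. vbound \<alpha>) (k1 (hs (e1 N) q2) (ri N))" (is "opcartesian _ _ _ ?\<epsilon>")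
proof -
  note ob = conjoint_data N
  have \<epsilon>: "?\<epsilon> \<in> Ar1" "d1 ?\<epsilon> = N" "c1 ?\<epsilon> = hc N fc" "Sv ?\<epsilon> = f" "Tv ?\<epsilon> = e0 (Th N)"
    using ob by simp_all
  show ?thesis
  proof (rule opcartesianI)
    fix \<psi> h
    assume \<psi>: "\<psi> \<in> Ar1" "d1 \<psi> = d1 ?\<epsilon>" and h: "h \<in> cAr D00" "cdom D00 h = ccod D00 (vbound ?\<epsilon>)"
      "vbound \<psi> = ccomp D00 h (vbound ?\<epsilon>)"
    obtain u v where uv: "h = (u, v)" by (cases h)
    have "u \<in> Ar0" "v \<in> Ar0" "d0 u = c0 f" "d0 v = Th N" "Sv \<psi> = k0 u f" "Tv \<psi> = k0 v (e0 (Th N))"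
      using h \<epsilon> N unfolding uv by simp_all
    moreover have "c0 (Sv \<psi>) = Sh (c1 \<psi>)" "c0 (Tv \<psi>) = Th (c1 \<psi>)" using \<psi> by simp_all
    ultimately have u: "u \<in> Ar0" "v \<in> Ar0" "d0 u = c0 f" "Sv \<psi> = k0 u f" "Tv \<psi> = v"
      "c0 u = Sh (c1 \<psi>)" "c0 v = Th (c1 \<psi>)"
      using ob by simp_all
    let ?\<chi> = "k1 (rr (c1 \<psi>)) (hs \<psi> (k1 (Us u) q1))"
    have "k1 ?\<chi> ?\<epsilon> = \<psi>" by (rule conjoint_source_factor) (use ob \<psi> \<epsilon> u in simp_all)
    then show "\<exists>\<chi>. \<chi> \<in> Ar1 \<and> d1 \<chi> = c1 ?\<epsilon> \<and> c1 \<chi> = c1 \<psi> \<and> vbound \<chi> = h \<and> k1 \<chi> ?\<epsilon> = \<psi>"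
      using ob \<psi> \<epsilon> u unfolding uv by (intro exI[of _ ?\<chi>]) simp
  next
    fix \<chi> \<chi>'
    assume \<chi>: "\<chi> \<in> Ar1" "\<chi>' \<in> Ar1" "d1 \<chi> = c1 ?\<epsilon>" "d1 \<chi>' = c1 ?\<epsilon>" "c1 \<chi> = c1 \<chi>'"
      "vbound \<chi> = vbound \<chi>'" "k1 \<chi> ?\<epsilon> = k1 \<chi>' ?\<epsilon>"
    have "\<chi> = k1 (rr (c1 \<chi>)) (hs (k1 \<chi> ?\<epsilon>) (k1 (Us (Sv \<chi>)) q1))"
      by (rule conjoint_source_recover[symmetric]) (use N \<chi> \<epsilon> in simp_all)
    also have "\<dots> = k1 (rr (c1 \<chi>')) (hs (k1 \<chi>' ?\<epsilon>) (k1 (Us (Sv \<chi>')) q1))" using \<chi> by simp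
    also have "\<dots> = \<chi>'" by (rule conjoint_source_recover) (use N \<chi> \<epsilon> in simp_all)
    finally show "\<chi> = \<chi>'" .
  qed (fact \<epsilon>(1))
qed

end

section \<open>The endo-cell functor\<close>

lemma endo_cat_simps [simp]:
  "cOb (endo_cat D) = {M \<in> Ob1. Sh M = Th M}"
  "cAr (endo_cat D) = {\<alpha> \<in> Ar1. Sv \<alpha> = Tv \<alpha> \<and> Sh (d1 \<alpha>) = Th (d1 \<alpha>) \<and> Sh (c1 \<alpha>) = Th (c1 \<alpha>)}"
  "cdom (endo_cat D) = d1" "ccod (endo_cat D) = c1" "ccomp (endo_cat D) = k1" "cid (endo_cat D) = e1"
  by (simp_all add: endo_cat_def)

lemma endo_functor: "functor (endo_cat D) D0 Sh Sv"
  unfolding functor_def by simp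

lemma endo_cartesian:
  assumes \<phi>: "cartesian D1 D00 (\<lambda>\<alpha>. vbound \<alpha>) \<phi>" and endo: "\<phi> \<in> cAr (endo_cat D)"
  shows "cartesian (endo_cat D) D0 Sv \<phi>"
proof (rule cartesianI)
  fix \<psi> g
  assume \<psi>: "\<psi> \<in> cAr (endo_cat D)" "ccod (endo_cat D) \<psi> = ccod (endo_cat D) \<phi>"
    and g: "g \<in> Ar0" "c0 g = d0 (Sv \<phi>)" "Sv \<psi> = k0 (Sv \<phi>) g"
  have "vbound \<psi> = ccomp D00 (vbound \<phi>) (g, g)" using \<psi> g endo by simp
  then obtain \<chi> where \<chi>: "\<chi> \<in> Ar1" "d1 \<chi> = d1 \<psi>" "c1 \<chi> = d1 \<phi>" "vbound \<chi> = (g, g)" "k1 \<phi> \<chi> = \<psi>"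
    using cartesian_lift[OF \<phi>, of \<psi> "(g, g)"] \<psi> g endo by auto
  then show "\<exists>\<chi>. \<chi> \<in> cAr (endo_cat D) \<and> cdom (endo_cat D) \<chi> = cdom (endo_cat D) \<psi> \<and>
      ccod (endo_cat D) \<chi> = cdom (endo_cat D) \<phi> \<and> Sv \<chi> = g \<and> ccomp (endo_cat D) \<phi> \<chi> = \<psi>"
    using \<psi> endo by (intro exI[of _ \<chi>]) simp
next
  fix \<chi> \<chi>'
  assume \<chi>: "\<chi> \<in> cAr (endo_cat D)" "\<chi>' \<in> cAr (endo_cat D)" "ccod (endo_cat D) \<chi> = cdom (endo_cat D) \<phi>"
    "ccod (endo_cat D) \<chi>' = cdom (endo_cat D) \<phi>" "cdom (endo_cat D) \<chi> = cdom (endo_cat D) \<chi>'"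
    "Sv \<chi> = Sv \<chi>'" "ccomp (endo_cat D) \<phi> \<chi> = ccomp (endo_cat D) \<phi> \<chi>'"
  show "\<chi> = \<chi>'" by (rule cartesian_unique[OF cat1 boundary_functor \<phi>]) (use \<chi> in simp_all)
qed (fact endo)

lemma endo_opcartesian:
  assumes \<epsilon>: "opcartesian D1 D00 (\<lambda>\<alpha>. vbound \<alpha>) \<epsilon>" and endo: "\<epsilon> \<in> cAr (endo_cat D)"
  shows "opcartesian (endo_cat D) D0 Sv \<epsilon>"
proof (rule opcartesianI)
  fix \<psi> h
  assume \<psi>: "\<psi> \<in> cAr (endo_cat D)" "cdom (endo_cat D) \<psi> = cdom (endo_cat D) \<epsilon>"
    and h: "h \<in> Ar0" "d0 h = c0 (Sv \<epsilon>)" "Sv \<psi> = k0 h (Sv \<epsilon>)"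
  have "vbound \<psi> = ccomp D00 (h, h) (vbound \<epsilon>)" using \<psi> h endo by simp
  then obtain \<chi> where \<chi>: "\<chi> \<in> Ar1" "d1 \<chi> = c1 \<epsilon>" "c1 \<chi> = c1 \<psi>" "vbound \<chi> = (h, h)" "k1 \<chi> \<epsilon> = \<psi>"
    using opcartesian_lift[OF \<epsilon>, of \<psi> "(h, h)"] \<psi> h endo by auto
  then show "\<exists>\<chi>. \<chi> \<in> cAr (endo_cat D) \<and> cdom (endo_cat D) \<chi> = ccod (endo_cat D) \<epsilon> \<and>
      ccod (endo_cat D) \<chi> = ccod (endo_cat D) \<psi> \<and> Sv \<chi> = h \<and> ccomp (endo_cat D) \<chi> \<epsilon> = \<psi>"
    using \<psi> endo by (intro exI[of _ \<chi>]) simp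
next
  fix \<chi> \<chi>'
  assume \<chi>: "\<chi> \<in> cAr (endo_cat D)" "\<chi>' \<in> cAr (endo_cat D)" "cdom (endo_cat D) \<chi> = ccod (endo_cat D) \<epsilon>"
    "cdom (endo_cat D) \<chi>' = ccod (endo_cat D) \<epsilon>" "ccod (endo_cat D) \<chi> = ccod (endo_cat D) \<chi>'"
    "Sv \<chi> = Sv \<chi>'" "ccomp (endo_cat D) \<chi> \<epsilon> = ccomp (endo_cat D) \<chi>' \<epsilon>"
  show "\<chi> = \<chi>'" by (rule opcartesian_unique[OF cat1 boundary_functor \<epsilon>]) (use \<chi> in simp_all)
qed (fact endo)

lemma endo_cartesian_lift:
  assumes "companion f fh p1 p2" and "conjoint f fc q1 q2"
    and M: "M \<in> Ob1" "Sh M = c0 f" "Th M = c0 f"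
  shows "\<exists>\<phi>. cartesian (endo_cat D) D0 Sv \<phi> \<and> c1 \<phi> = M \<and> Sv \<phi> = f"
proof -
  note dat = companion_data[OF assms(1)] conjoint_data[OF assms(2)] M
  define M' where "M' = hc M fh"
  have M': "M' \<in> Ob1" "Sh M' = d0 f" "Th M' = c0 f" using dat by (simp_all add: M'_def)
  let ?\<phi>1 = "k1 (rr M) (hs (e1 M) p1)" and ?\<phi>2 = "k1 (ll M') (hs q1 (e1 M'))"
  have "cartesian D1 D00 (\<lambda>\<alpha>. vbound \<alpha>) (k1 ?\<phi>1 ?\<phi>2)"
    by (rule cartesian_comp[OF cat1 category_D00 boundary_functor
          companion_source_cartesian[OF assms(1) M(1,2)] conjoint_target_cartesian[OF assms(2) M'(1,3)]])
      (use dat M' in \<open>simp add: M'_def\<close>)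
  moreover have "k1 ?\<phi>1 ?\<phi>2 \<in> cAr (endo_cat D)" "c1 (k1 ?\<phi>1 ?\<phi>2) = M" "Sv (k1 ?\<phi>1 ?\<phi>2) = f"
    using dat M' by (simp_all add: M'_def)
  ultimately show ?thesis using endo_cartesian by blast
qed

lemma endo_opcartesian_lift:
  assumes "companion f fh p1 p2" and "conjoint f fc q1 q2"
    and N: "N \<in> Ob1" "Sh N = d0 f" "Th N = d0 f"
  shows "\<exists>\<epsilon>. opcartesian (endo_cat D) D0 Sv \<epsilon> \<and> d1 \<epsilon> = N \<and> Sv \<epsilon> = f"
proof -
  note dat = companion_data[OF assms(1)] conjoint_data[OF assms(2)] N
  define N' where "N' = hc N fc"
  have N': "N' \<in> Ob1" "Sh N' = c0 f" "Th N' = d0 f" using dat by (simp_all add: N'_def)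
  let ?\<epsilon>2 = "k1 (hs (e1 N) q2) (ri N)" and ?\<epsilon>1 = "k1 (hs p2 (e1 N')) (li N')"
  have "opcartesian D1 D00 (\<lambda>\<alpha>. vbound \<alpha>) (k1 ?\<epsilon>1 ?\<epsilon>2)"
    by (rule opcartesian_comp[OF cat1 category_D00 boundary_functor
          conjoint_source_opcartesian[OF assms(2) N(1,2)] companion_target_opcartesian[OF assms(1) N'(1,3)]])
      (use dat N' in \<open>simp add: N'_def\<close>)
  moreover have "k1 ?\<epsilon>1 ?\<epsilon>2 \<in> cAr (endo_cat D)" "d1 (k1 ?\<epsilon>1 ?\<epsilon>2) = N" "Sv (k1 ?\<epsilon>1 ?\<epsilon>2) = f"
    using dat N' by (simp_all add: N'_def)
  ultimately show ?thesis using endo_opcartesian by blast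
qed

end

locale fibrant_double = pseudo_double +
  assumes companions: "f \<in> cAr (dc_D0 D) \<Longrightarrow> has_companion D f"
    and conjoints: "f \<in> cAr (dc_D0 D) \<Longrightarrow> has_conjoint D f"
begin

lemma fibration_endo: "fibration (endo_cat D) D0 Sh Sv"
  unfolding fibration_def
proof (intro conjI ballI impI endo_functor)
  fix M f
  assume M: "M \<in> cOb (endo_cat D)" and f: "f \<in> Ar0" "c0 f = Sh M"
  obtain fh p1 p2 where "companion f fh p1 p2" using companions[OF f(1)] f(1) by (rule has_companionE)
  moreover obtain fc q1 q2 where "conjoint f fc q1 q2" using conjoints[OF f(1)] f(1) by (rule has_conjointE)
  ultimately show "\<exists>\<phi>. cartesian (endo_cat D) D0 Sv \<phi> \<and> ccod (endo_cat D) \<phi> = M \<and> Sv \<phi> = f"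
    using endo_cartesian_lift M f by simp
qed

lemma opfibration_endo: "opfibration (endo_cat D) D0 Sh Sv"
  unfolding opfibration_def
proof (intro conjI ballI impI endo_functor)
  fix N f
  assume N: "N \<in> cOb (endo_cat D)" and f: "f \<in> Ar0" "d0 f = Sh N"
  obtain fh p1 p2 where "companion f fh p1 p2" using companions[OF f(1)] f(1) by (rule has_companionE)
  moreover obtain fc q1 q2 where "conjoint f fc q1 q2" using conjoints[OF f(1)] f(1) by (rule has_conjointE)
  ultimately show "\<exists>\<epsilon>. opcartesian (endo_cat D) D0 Sv \<epsilon> \<and> cdom (endo_cat D) \<epsilon> = N \<and> Sv \<epsilon> = f"
    using endo_opcartesian_lift N f by simp
qed

end

theorem proposition3p15:
  fixes D :: "('o, 'v, 'h, 's) dbl_data"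
  assumes "fibrant D"
  shows "bifibration (endo_cat D) (dc_D0 D) (dc_hsrc D) (dc_vsrc D)"
proof -
  interpret fibrant_double D
    using assms unfolding fibrant_def by unfold_locales blast+
  show ?thesis unfolding bifibration_def using fibration_endo opfibration_endo by blast
qed

end
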